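(* Consider the social learning setting described in the context, and suppose: (i) (finite KL divergences) $D[f_k\|L_k(\theta)]<\infty$ for all $k=1,\ldots,N$ and all $\theta\in\Theta$; (ii) (initial beliefs) $\mu_{k,0}(\theta)>0$ for all $\theta\in\Theta$ and all $k$; (iii) (unique minimizer) for each receiving agent $k\in\mathcal{R}$ the function $\mathscr{D}_k(\theta)=\sum_{\ell\in\mathcal{S}}\omega_{\ell k}\,D[f_\ell\|L_\ell(\theta)]$ has a unique minimizer $\theta^\star_k=\arg\min_{\theta\in\Theta}\mathscr{D}_k(\theta)$. Then for every receiving agent $k\in\mathcal{R}$, $$\lim_{i\to\infty}\boldsymbol{\mu}_{k,i}(\theta^\star_k)=1\quad\text{almost surely},$$ and for every $\theta\neq\theta^\star_k$, $$\lim_{i\to\infty}\frac{\log\boldsymbol{\mu}_{k,i}(\theta)}{i}=\mathscr{D}_k(\theta^\star_k)-\mathscr{D}_k(\theta)\quad\text{almost surely}$$ (in particular these limits exist almost surely).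
   Context: Data and inference model: there are $N$ agents; agent $k$ observes at each time $i\in\mathbb{N}$ a random variable $\boldsymbol{\xi}_{k,i}\in\mathcal{X}_k$. For each $k$, the variables $\{\boldsymbol{\xi}_{k,i}\}_{i}$ are independent over time and identically distributed with true distribution $f_k$ (data may be dependent across agents). All data are either continuous (densities) or discrete (probability mass functions), with the same nature for all agents. There is a finite set of hypotheses $\Theta=\{1,\ldots,H\}$, and agent $k$ has likelihood functions $L_k(\xi|\theta)$, $\xi\in\mathcal{X}_k$, $\theta\in\Theta$. The KL divergence is $D[f_k\|L_k(\theta)]=\mathbb{E}_{f_k}\big[\log\frac{f_k(\boldsymbol{\xi}_k)}{L_k(\boldsymbol{\xi}_k|\theta)}\big]$. Algorithm: starting from initial beliefs $\mu_{k,0}$ (probability mass functions on $\Theta$), at each time $i\ge1$ each agent $k$ computes $$\boldsymbol{\psi}_{k,i}(\theta)=\frac{\boldsymbol{\mu}_{k,i-1}(\theta)L_k(\boldsymbol{\xi}_{k,i}|\theta)}{\sum_{\theta'\in\Theta}\boldsymbol{\mu}_{k,i-1}(\theta')L_k(\boldsymbol{\xi}_{k,i}|\theta')},\qquad \boldsymbol{\mu}_{k,i}(\theta)=\frac{\exp\{\sum_{\ell=1}^N a_{\ell k}\log\boldsymbol{\psi}_{\ell,i}(\theta)\}}{\sum_{\theta'\in\Theta}\exp\{\sum_{\ell=1}^N a_{\ell k}\log\boldsymbol{\psi}_{\ell,i}(\theta')\}},$$ where $A=[a_{\ell k}]$ is an $N\times N$ matrix with nonnegative entries that is left-stochastic ($\sum_{\ell}a_{\ell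 k}=1$ for all $k$), with $a_{\ell k}=0$ unless agent $k$ receives information from agent $\ell$. Weak graph: the agents are partitioned into $S+R$ disjoint sub-networks $\mathcal{N}_1,\ldots,\mathcal{N}_{S+R}$ (agents listed in increasing order across components), with sending part $\mathcal{S}=\bigcup_{s=1}^S\mathcal{N}_s$ and receiving part $\mathcal{R}=\bigcup_{r=1}^R\mathcal{N}_{S+r}$. The matrix $A$ has the block form $A=\begin{bmatrix}A_{\mathcal{S}}&A_{\mathcal{S}\mathcal{R}}\\0&A_{\mathcal{R}}\end{bmatrix}$ with $A_{\mathcal{S}}=\mathrm{blockdiag}\{A_{\mathcal{N}_1},\ldots,A_{\mathcal{N}_S}\}$ (no links between distinct sending sub-networks and no links from receiving to sending agents). Each sending sub-network is strongly connected (its graph is connected and at least one of its agents has $a_{\ell\ell}>0$), with Perron vector $p^{(s)}$: $A_{\mathcal{N}_s}p^{(s)}=p^{(s)}$, $\mathbb{1}^\top p^{(s)}=1$, all entries positive. Each receiving sub-network is connected, and each receiving sub-network is connected to at least one agent in each sending sub-network. In this setting $I-A_{\mathcal{R}}$ is invertible and $\lim_{i\to\infty}A^i=\begin{bmatrix}E&\Omega\\0&0\end{bmatrix}$, where $E=\mathrm{blockdiag}\{p^{(1)}\mathbb{1}_{N_1}^\top,\ldots,p^{(S)}\mathbb{1}_{N_S}^\top\}$ ($N_s=|\mathcal{N}_s|$) and $\Omega=EA_{\mathcal{S}\mathcal{R}}(I-A_{\mathcal{R}})^{-1}$. The entries of $\Omega$ are denoted $\omega_{\ell k}$, $\ell\in\mathcal{S}$,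 $k\in\mathcal{R}$ (columns indexed by the receiving agents' labels). *)

theory Defs
  imports "HOL-Probability.Probability"
begin

(* Agents are labelled 0..N-1 (the paper uses 1..N). *)

definition KL_div :: "'x measure \<Rightarrow> ('x \<Rightarrow> real) \<Rightarrow> ('x \<Rightarrow> real) \<Rightarrow> real" where
  "KL_div \<nu> f g = (\<integral>x. ln (f x / g x) \<partial>(density \<nu> (\<lambda>x. ennreal (f x))))"

definition KL_finite :: "'x measure \<Rightarrow> ('x \<Rightarrow> real) \<Rightarrow> ('x \<Rightarrow> real) \<Rightarrow> bool" where
  "KL_finite \<nu> f g \<longleftrightarrow>
     (AE x in density \<nu> (\<lambda>x. ennreal (f x)). 0 < g x) \<and>
     integrable (density \<nu> (\<lambda>x. ennreal (f x))) (\<lambda>x. ln (f x / g x))"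

(* belief A N L mu0 x i k theta = mu_{k,i}(theta), where x l j is the observation of agent l at time j *)
fun belief :: "(nat \<Rightarrow> nat \<Rightarrow> real) \<Rightarrow> nat \<Rightarrow> (nat \<Rightarrow> 'x \<Rightarrow> 'h::finite \<Rightarrow> real)
     \<Rightarrow> (nat \<Rightarrow> 'h \<Rightarrow> real) \<Rightarrow> (nat \<Rightarrow> nat \<Rightarrow> 'x) \<Rightarrow> nat \<Rightarrow> nat \<Rightarrow> 'h \<Rightarrow> real" where
  "belief A N L \<mu>0 x 0 = \<mu>0"
| "belief A N L \<mu>0 x (Suc i) =
     (let \<mu> = belief A N L \<mu>0 x i;
          \<psi> = (\<lambda>l \<theta>. \<mu> l \<theta> * L l (x l (Suc i)) \<theta> /
                      (\<Sum>\<theta>'\<in>UNIV. \<mu> l \<theta>' * L l (x l (Suc i)) \<theta>'))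
      in (\<lambda>k \<theta>. exp (\<Sum>l<N. A l k * ln (\<psi> l \<theta>)) /
                 (\<Sum>\<theta>'\<in>UNIV. exp (\<Sum>l<N. A l k * ln (\<psi> l \<theta>')))))"

(* cmp k = index (0-based) of the sub-network containing agent k;
   sub-networks 0..S-1 are sending, S..S+R-1 are receiving *)
definition subnet :: "(nat \<Rightarrow> nat) \<Rightarrow> nat \<Rightarrow> nat \<Rightarrow> nat set" where
  "subnet cmp N j = {k. k < N \<and> cmp k = j}"

definition sending :: "(nat \<Rightarrow> nat) \<Rightarrow> nat \<Rightarrow> nat \<Rightarrow> nat set" where
  "sending cmp N S = {k. k < N \<and> cmp k < S}"

definition receiving :: "(nat \<Rightarrow> nat) \<Rightarrow> nat \<Rightarrow> nat \<Rightarrow> nat set" where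
  "receiving cmp N S = {k. k < N \<and> S \<le> cmp k}"

(* directed edges l -> k (k receives from l) inside the agent set C *)
definition edges_in :: "(nat \<Rightarrow> nat \<Rightarrow> real) \<Rightarrow> nat set \<Rightarrow> (nat \<times> nat) set" where
  "edges_in A C = {(l, k). l \<in> C \<and> k \<in> C \<and> 0 < A l k}"

definition connected_sub :: "(nat \<Rightarrow> nat \<Rightarrow> real) \<Rightarrow> nat set \<Rightarrow> bool" where
  "connected_sub A C \<longleftrightarrow> (\<forall>l\<in>C. \<forall>k\<in>C. (l, k) \<in> (edges_in A C)\<^sup>*)"

definition strongly_connected_sub :: "(nat \<Rightarrow> nat \<Rightarrow> real) \<Rightarrow> nat set \<Rightarrow> bool" where
  "strongly_connected_sub A C \<longleftrightarrow> connected_sub A C \<and> (\<exists>l\<in>C. 0 < A l l)"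

definition weak_graph :: "nat \<Rightarrow> (nat \<Rightarrow> nat \<Rightarrow> real) \<Rightarrow> (nat \<Rightarrow> nat) \<Rightarrow> nat \<Rightarrow> nat \<Rightarrow> bool" where
  "weak_graph N A cmp S R \<longleftrightarrow>
     (\<forall>l<N. \<forall>k<N. 0 \<le> A l k) \<and>
     (\<forall>k<N. (\<Sum>l<N. A l k) = 1) \<and>
     (\<forall>k<N. cmp k < S + R) \<and>
     (\<forall>k k'. k \<le> k' \<longrightarrow> k' < N \<longrightarrow> cmp k \<le> cmp k') \<and>
     (\<forall>j<S + R. subnet cmp N j \<noteq> {}) \<and>
     (\<forall>l<N. \<forall>k<N. cmp l < S \<and> cmp k < S \<and> cmp l \<noteq> cmp k \<longrightarrow> A l k = 0) \<and>
     (\<forall>l<N. \<forall>k<N. S \<le> cmp l \<and> cmp k < S \<longrightarrow> A l k = 0) \<and>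
     (\<forall>s<S. strongly_connected_sub A (subnet cmp N s)) \<and>
     (\<forall>r<R. connected_sub A (subnet cmp N (S + r))) \<and>
     (\<forall>r<R. \<forall>s<S. \<exists>l\<in>subnet cmp N s. \<exists>k\<in>subnet cmp N (S + r). 0 < A l k)"

definition perron_vec :: "(nat \<Rightarrow> nat \<Rightarrow> real) \<Rightarrow> nat set \<Rightarrow> (nat \<Rightarrow> real) \<Rightarrow> bool" where
  "perron_vec A C p \<longleftrightarrow>
     (\<forall>l\<in>C. (\<Sum>l'\<in>C. A l l' * p l') = p l) \<and> sum p C = 1 \<and> (\<forall>l\<in>C. 0 < p l)"

definition inverse_I_minus :: "(nat \<Rightarrow> nat \<Rightarrow> real) \<Rightarrow> nat set \<Rightarrow> (nat \<Rightarrow> nat \<Rightarrow> real) \<Rightarrow> bool" where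
  "inverse_I_minus A Rs B \<longleftrightarrow>
     (\<forall>i\<in>Rs. \<forall>k\<in>Rs. (\<Sum>j\<in>Rs. ((if i = j then 1 else 0) - A i j) * B j k) = (if i = k then 1 else 0)) \<and>
     (\<forall>i\<in>Rs. \<forall>k\<in>Rs. (\<Sum>j\<in>Rs. B i j * ((if j = k then 1 else 0) - A j k)) = (if i = k then 1 else 0))"

(* E = blockdiag{p^(s) 1^T}: E l l' = p l if l, l' in the same sending sub-network *)
definition Emat :: "(nat \<Rightarrow> nat) \<Rightarrow> (nat \<Rightarrow> real) \<Rightarrow> nat \<Rightarrow> nat \<Rightarrow> real" where
  "Emat cmp p l l' = (if cmp l = cmp l' then p l else 0)"

(* Omega = E A_SR (I - A_R)^{-1}, entry (l, k) with l sending, k receiving *)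
definition omega :: "nat \<Rightarrow> (nat \<Rightarrow> nat \<Rightarrow> real) \<Rightarrow> (nat \<Rightarrow> nat) \<Rightarrow> nat \<Rightarrow> (nat \<Rightarrow> real)
     \<Rightarrow> (nat \<Rightarrow> nat \<Rightarrow> real) \<Rightarrow> nat \<Rightarrow> nat \<Rightarrow> real" where
  "omega N A cmp S p B l k =
     (\<Sum>l'\<in>sending cmp N S. Emat cmp p l l' *
        (\<Sum>j\<in>receiving cmp N S. A l' j * B j k))"

definition Dscr :: "nat \<Rightarrow> (nat \<Rightarrow> nat \<Rightarrow> real) \<Rightarrow> (nat \<Rightarrow> nat) \<Rightarrow> nat \<Rightarrow> (nat \<Rightarrow> real)
     \<Rightarrow> (nat \<Rightarrow> nat \<Rightarrow> real) \<Rightarrow> (nat \<Rightarrow> 'x measure) \<Rightarrow> (nat \<Rightarrow> 'x \<Rightarrow> real)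
     \<Rightarrow> (nat \<Rightarrow> 'x \<Rightarrow> 'h \<Rightarrow> real) \<Rightarrow> nat \<Rightarrow> 'h \<Rightarrow> real" where
  "Dscr N A cmp S p B \<nu> f L k \<theta> =
     (\<Sum>l\<in>sending cmp N S. omega N A cmp S p B l k * KL_div (\<nu> l) (f l) (\<lambda>x. L l x \<theta>))"

end

(* Fix a receiving agent k and the minimiser theta_s of D_k.  Taking logarithms of belief ratios
   linearises the recursion: the log-ratios u_i(theta) = log mu_i(theta) - log mu_i(theta_s)
   satisfy u_{i+1} = A^T (u_i + c_{i+1}), where the inputs
   c_{l,i} = log L_l(xi_{l,i}|theta) - log L_l(xi_{l,i}|theta_s) are i.i.d. in time with mean
   D[f_l||L_l(theta_s)] - D[f_l||L_l(theta)].  By the strong law of large numbers (proved below in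
   Etemadi's form) their Cesaro means converge almost surely, and the rest is deterministic.
   A sending sub-network is closed and primitive, so its agents reach consensus and u_i/i tends to
   the Perron average of the mean inputs.  The receiving block A_R leaks mass towards the sending
   part, so its recursion contracts and u_i/i tends to the fixed point driven by the sending rates,
   which is sum_l omega_lk (D[f_l||L_l(theta_s)] - D[f_l||L_l(theta)]) = D_k(theta_s) - D_k(theta).
   For theta <> theta_s this rate is negative, so the belief concentrates on theta_s. *)

theory Submission
  imports Defs
begin

section \<open>Cesaro means and sublinear growth\<close>

lemma cesaro_mean_tendsto_0:
  fixes b :: "nat \<Rightarrow> real"
  assumes "b \<longlonglongrightarrow> 0"
  shows "(\<lambda>n. (\<Sum>i<n. b i) / real n) \<longlonglongrightarrow> 0"
proof (rule LIMSEQ_I)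
  fix r :: real assume r: "0 < r"
  obtain N0 where N0: "\<And>i. i \<ge> N0 \<Longrightarrow> \<bar>b i\<bar> < r / 2"
    using LIMSEQ_D[OF assms, of "r/2"] r by auto
  define C where "C = (\<Sum>i<N0. \<bar>b i\<bar>)"
  obtain N1 :: nat where N1: "2 * C / r < real N1" using reals_Archimedean2 by blast
  show "\<exists>no. \<forall>n\<ge>no. norm ((\<Sum>i<n. b i) / real n - 0) < r"
  proof (intro exI allI impI)
    fix n assume n: "n \<ge> max N0 (max N1 1)"
    have "(\<Sum>i<n. \<bar>b i\<bar>) = C + (\<Sum>i\<in>{N0..<n}. \<bar>b i\<bar>)"
      unfolding C_def using n by (metis atLeast0LessThan max.bounded_iff sum.atLeastLessThan_concat zero_le)
    also have "(\<Sum>i\<in>{N0..<n}. \<bar>b i\<bar>) \<le> (\<Sum>i\<in>{N0..<n}. r/2)"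
      by (intro sum_mono) (use N0 in \<open>auto simp: less_imp_le\<close>)
    also have "\<dots> \<le> real n * (r/2)" using r by simp
    also have "C < real n * (r/2)"
    proof -
      have "2 * C < real N1 * r" using N1 r by (simp add: field_simps)
      also have "\<dots> \<le> real n * r" using n r by (intro mult_right_mono) auto
      finally show ?thesis by simp
    qed
    finally have "\<bar>\<Sum>i<n. b i\<bar> < real n * r"
      using sum_abs[of b "{..<n}"] by linarith
    then show "norm ((\<Sum>i<n. b i) / real n - 0) < r"
      using n by (simp add: field_simps)
  qed
qed

lemma cesaro_mean_tendsto:
  fixes a :: "nat \<Rightarrow> real"
  assumes "a \<longlonglongrightarrow> l"
  shows "(\<lambda>n. (\<Sum>i<n. a i) / real n) \<longlonglongrightarrow> l"
proof -
  have "(\<lambda>n. (\<Sum>i<n. a i - l) / real n + l) \<longlonglongrightarrow> 0 + l"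
    by (intro tendsto_add cesaro_mean_tendsto_0 LIM_zero assms tendsto_const)
  moreover have "eventually (\<lambda>n. (\<Sum>i<n. a i - l) / real n + l = (\<Sum>i<n. a i) / real n) sequentially"
    using eventually_gt_at_top[of 0] by eventually_elim (simp add: sum_subtractf field_simps)
  ultimately show ?thesis by (simp add: tendsto_cong)
qed

lemma cesaro_mean_eventually_eq:
  fixes a b :: "nat \<Rightarrow> real"
  assumes ev: "eventually (\<lambda>n. a n = b n) sequentially"
    and lim: "(\<lambda>n. (\<Sum>i<n. b i) / real n) \<longlonglongrightarrow> l"
  shows "(\<lambda>n. (\<Sum>i<n. a i) / real n) \<longlonglongrightarrow> l"
proof -
  have "(\<lambda>n. a n - b n) \<longlonglongrightarrow> 0"
    using ev by (intro tendsto_eventually) (auto elim: eventually_mono)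
  then have "(\<lambda>n. (\<Sum>i<n. b i) / real n + (\<Sum>i<n. a i - b i) / real n) \<longlonglongrightarrow> l + 0"
    by (intro tendsto_add lim cesaro_mean_tendsto)
  then show ?thesis by (simp add: sum_subtractf diff_divide_distrib)
qed

lemma over_n_tendsto_0_if_cesaro_mean_tendsto:
  fixes c :: "nat \<Rightarrow> real"
  assumes "(\<lambda>n. (\<Sum>j<n. c (Suc j)) / real n) \<longlonglongrightarrow> l"
  shows "(\<lambda>i. c i / real i) \<longlonglongrightarrow> 0"
proof -
  define a where "a n = (\<Sum>j<n. c (Suc j)) / real n" for n
  have "c (Suc n) / real (Suc n) = a (Suc n) - a n * (real n / real (Suc n))" for n
    by (cases "n = 0") (simp_all add: a_def add_divide_distrib)
  moreover have "(\<lambda>n. a (Suc n) - a n * (real n / real (Suc n))) \<longlonglongrightarrow> l - l * 1"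
    unfolding a_def by (intro tendsto_diff tendsto_mult LIMSEQ_Suc LIMSEQ_n_over_Suc_n assms)
  ultimately have "(\<lambda>n. c (Suc n) / real (Suc n)) \<longlonglongrightarrow> 0" by simp
  then show ?thesis by (rule LIMSEQ_imp_Suc)
qed

lemma shift_over_n_tendsto_0:
  fixes f :: "nat \<Rightarrow> real"
  assumes "(\<lambda>i. f i / real i) \<longlonglongrightarrow> 0"
  shows "(\<lambda>i. f (i + t) / real i) \<longlonglongrightarrow> 0"
proof -
  have "(\<lambda>i. f (i + t) / real (i + t) * (1 + real t / real i)) \<longlonglongrightarrow> 0 * (1 + 0)"
    using LIMSEQ_ignore_initial_segment[OF assms, of t]
    by (intro tendsto_mult tendsto_add tendsto_const lim_const_over_n) simp_all
  moreover have "eventually (\<lambda>i. f (i + t) / real (i + t) * (1 + real t / real i) = f (i + t) / real i) sequentially"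
    using eventually_gt_at_top[of 0]
  proof eventually_elim
    case (elim i)
    then have "1 + real t / real i = real (i + t) / real i" by (simp add: field_simps)
    then show ?case by simp
  qed
  ultimately show ?thesis by (simp add: tendsto_cong)
qed

lemma bounded_if_periodically_nonincreasing:
  fixes q :: "nat \<Rightarrow> real"
  assumes m: "0 < m" and step: "\<And>i. i \<ge> I \<Longrightarrow> q (i + m) \<le> q i"
  shows "\<exists>Q. \<forall>i\<ge>I. q i \<le> Q"
proof (intro exI allI impI)
  fix i assume "I \<le> i"
  then show "q i \<le> Max (q ` {I..<I + m})"
  proof (induction i rule: less_induct)
    case (less i)
    show ?case
    proof (cases "i < I + m")
      case True
      then show ?thesis using less.prems by (intro Max_ge) auto
    next
      case False
      then have "q i \<le> q (i - m)" using step[of "i - m"] by simp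
      also have "\<dots> \<le> Max (q ` {I..<I + m})" using False m by (intro less.IH) auto
      finally show ?thesis .
    qed
  qed
qed

text \<open>Above the line \<open>\<epsilon> i\<close>, the excess of \<open>s\<close> contracts every \<open>m\<close> steps, so it stays bounded.\<close>

lemma contraction_over_n_tendsto_0:
  fixes s r :: "nat \<Rightarrow> real"
  assumes m: "0 < m" and \<rho>: "0 \<le> \<rho>" "\<rho> < 1" and s_nonneg: "\<And>i. 0 \<le> s i"
    and step: "\<And>i. s (i + m) \<le> \<rho> * s i + r i"
    and r: "(\<lambda>i. r i / real i) \<longlonglongrightarrow> 0"
  shows "(\<lambda>i. s i / real i) \<longlonglongrightarrow> 0"
proof (rule LIMSEQ_I)
  fix \<epsilon> :: real assume "0 < \<epsilon>"
  define \<eta> where "\<eta> = \<epsilon> / 2"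
  have \<eta>: "0 < \<eta>" using \<open>0 < \<epsilon>\<close> unfolding \<eta>_def by simp
  obtain I where I: "\<And>i. i \<ge> I \<Longrightarrow> \<bar>r i / real i\<bar> < \<eta> * (1 - \<rho>)"
    using LIMSEQ_D[OF r, of "\<eta> * (1 - \<rho>)"] \<eta> \<rho> by auto
  define q where "q i = max 0 (s i - \<eta> * real i)" for i
  have "q (i + m) \<le> q i" if "i \<ge> Suc I" for i
  proof -
    have "r i / real i < \<eta> * (1 - \<rho>)"
      using I[of i] that abs_ge_self[of "r i / real i"] by linarith
    then have "r i \<le> \<eta> * (1 - \<rho>) * real i" using that by (simp add: divide_less_eq less_imp_le)
    moreover have "0 \<le> \<eta> * real m" using \<eta> by simp
    ultimately have "s (i + m) - \<eta> * real (i + m) \<le> \<rho> * (s i - \<eta> * real i)"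
      using step[of i] by (simp add: algebra_simps)
    also have "\<dots> \<le> \<rho> * q i" unfolding q_def using \<rho> by (intro mult_left_mono) auto
    also have "\<dots> \<le> q i" using \<rho> by (simp add: q_def mult_left_le_one_le)
    finally show ?thesis by (simp add: q_def)
  qed
  then obtain Q where Q: "\<And>i. i \<ge> Suc I \<Longrightarrow> q i \<le> Q"
    using bounded_if_periodically_nonincreasing[OF m] by blast
  obtain I' :: nat where I': "Q / \<eta> < real I'" using reals_Archimedean2 by blast
  show "\<exists>no. \<forall>i\<ge>no. norm (s i / real i - 0) < \<epsilon>"
  proof (intro exI allI impI)
    fix i assume i: "i \<ge> max (Suc I) I'"
    have "s i \<le> \<eta> * real i + q i" unfolding q_def by simp
    also have "q i \<le> Q" using Q i by simp
    also have "Q < \<eta> * real i"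
      using I' i \<eta> by (simp add: divide_less_eq mult.commute) (smt (verit) mult_left_mono of_nat_mono)
    finally have "s i < \<epsilon> * real i" unfolding \<eta>_def by simp
    then show "norm (s i / real i - 0) < \<epsilon>" using s_nonneg[of i] i by (simp add: divide_less_eq)
  qed
qed

lemma over_Suc_tendsto:
  fixes f :: "nat \<Rightarrow> real"
  assumes "(\<lambda>i. f i / real i) \<longlonglongrightarrow> l"
  shows "(\<lambda>i. f i / real (Suc i)) \<longlonglongrightarrow> l"
proof -
  have "(\<lambda>i. f i / real i * (real i / real (Suc i))) \<longlonglongrightarrow> l"
    using tendsto_mult[OF assms LIMSEQ_n_over_Suc_n] by simp
  moreover have "eventually (\<lambda>i. f i / real i * (real i / real (Suc i)) = f i / real (Suc i)) sequentially"
    using eventually_gt_at_top[of 0] by eventually_elim simp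
  ultimately show ?thesis by (rule Lim_transform_eventually)
qed

section \<open>Etemadi's strong law of large numbers\<close>

definition floor_pow :: "real \<Rightarrow> nat \<Rightarrow> nat" where
  "floor_pow a m = nat \<lfloor>a ^ m\<rfloor>"

lemma floor_pow_bounds:
  assumes "1 \<le> a"
  shows "real (floor_pow a m) \<le> a ^ m" "a ^ m - 1 < real (floor_pow a m)"
    "1 \<le> floor_pow a m" "a ^ m \<le> 2 * real (floor_pow a m)"
proof -
  have "1 \<le> a ^ m" using assms by (simp add: one_le_power)
  then have f1: "1 \<le> \<lfloor>a ^ m\<rfloor>" by (simp add: le_floor_iff)
  then have eq: "real (floor_pow a m) = real_of_int \<lfloor>a ^ m\<rfloor>" unfolding floor_pow_def by simp
  show "real (floor_pow a m) \<le> a ^ m" "a ^ m - 1 < real (floor_pow a m)"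
    "a ^ m \<le> 2 * real (floor_pow a m)" unfolding eq using f1 by linarith+
  show "1 \<le> floor_pow a m" unfolding floor_pow_def using f1 by linarith
qed

lemma floor_pow_pos: "1 \<le> a \<Longrightarrow> 0 < real (floor_pow a m)"
  using floor_pow_bounds(3)[of a m] by simp

lemma eventually_le_power:
  fixes a c :: real
  assumes "1 < a"
  shows "eventually (\<lambda>m. c \<le> a ^ m) sequentially"
proof -
  obtain n0 where "c < a ^ n0" using real_arch_pow[OF assms] by blast
  moreover have "a ^ n0 \<le> a ^ m" if "n0 \<le> m" for m using assms that by (intro power_increasing) auto
  ultimately show ?thesis unfolding eventually_sequentially by (meson less_le_trans less_imp_le)
qed

lemma filterlim_floor_pow:
  assumes "1 < a"
  shows "filterlim (floor_pow a) at_top sequentially"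
  unfolding filterlim_at_top
proof
  fix z :: nat
  have "eventually (\<lambda>m. real z + 1 \<le> a ^ m) sequentially"
    by (rule eventually_le_power[OF assms])
  then show "eventually (\<lambda>m. z \<le> floor_pow a m) sequentially"
  proof eventually_elim
    case (elim m)
    then have "real z < real (floor_pow a m)" using floor_pow_bounds(2)[of a m] assms by linarith
    then show ?case by simp
  qed
qed

lemma floor_pow_Suc_le:
  assumes a: "1 < a"
  shows "eventually (\<lambda>m. real (floor_pow a (Suc m)) \<le> a\<^sup>2 * real (floor_pow a m)) sequentially"
proof -
  have "eventually (\<lambda>m. a / (a - 1) \<le> a ^ m) sequentially"
    by (rule eventually_le_power[OF a])
  then show ?thesis
  proof eventually_elim
    case (elim m)
    then have "a \<le> a ^ m * (a - 1)" using a by (simp add: field_simps)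
    then have "a ^ m \<le> a * (a ^ m - 1)" by (simp add: algebra_simps)
    also have "\<dots> \<le> a * real (floor_pow a m)"
      using floor_pow_bounds(2)[of a m] a by (intro mult_left_mono) auto
    finally have "a * a ^ m \<le> a\<^sup>2 * real (floor_pow a m)"
      using a by (simp add: power2_eq_square mult.assoc)
    moreover have "real (floor_pow a (Suc m)) \<le> a * a ^ m"
      using floor_pow_bounds(1)[of a "Suc m"] a by simp
    ultimately show ?case by linarith
  qed
qed

lemma sum_inverse_powers_above_le:
  fixes a x :: real
  assumes a: "1 < a" and x: "0 < x"
  shows "(\<Sum>m<n. if x \<le> a ^ m then 1 / a ^ m else 0) \<le> a / (a - 1) / x"
proof -
  define h where "h m = min (1 / x) (1 / a ^ m)" for m
  define c where "c = a / (a - 1)"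
  have c: "0 < c" using a unfolding c_def by simp
  have inv_pow_Suc: "1 / a ^ Suc m \<le> 1 / a ^ m" for m using a by (simp add: field_simps)
  have "(if x \<le> a ^ m then 1 / a ^ m else 0) \<le> c * (h m - h (Suc m))" for m
  proof (cases "x \<le> a ^ m")
    case True
    have am: "0 < a ^ m" using a by simp
    have hm: "h m = 1 / a ^ m" unfolding h_def using True x am by (simp add: frac_le)
    then have "h (Suc m) = 1 / a ^ Suc m"
      using inv_pow_Suc[of m] unfolding h_def by (metis min.absorb_iff2 min.bounded_iff)
    with hm have "c * (h m - h (Suc m)) = 1 / a ^ m"
      unfolding c_def using a am by (simp add: field_simps)
    then show ?thesis using True by simp
  next
    case False
    have "h (Suc m) \<le> h m" unfolding h_def using inv_pow_Suc[of m] by (intro min.mono) auto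
    then show ?thesis using False c by simp
  qed
  then have "(\<Sum>m<n. if x \<le> a ^ m then 1 / a ^ m else 0) \<le> (\<Sum>m<n. c * (h m - h (Suc m)))"
    by (intro sum_mono)
  also have "\<dots> = c * (h 0 - h n)" by (simp add: sum_distrib_left[symmetric] sum_lessThan_telescope')
  also have "\<dots> \<le> c * (1 / x)"
  proof -
    have "0 \<le> h n" unfolding h_def using x a by auto
    then have "h 0 - h n \<le> 1 / x" unfolding h_def by linarith
    then show ?thesis using c by (intro mult_left_mono) auto
  qed
  finally show ?thesis unfolding c_def by simp
qed

lemma sum_truncated_square_over_floor_pow_le:
  fixes a x :: real
  assumes a: "1 < a" and x: "0 \<le> x"
  shows "(\<Sum>m<n. if x \<le> real (floor_pow a m) then x\<^sup>2 / real (floor_pow a m) else 0)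
           \<le> 2 * a / (a - 1) * x"
proof (cases "x = 0")
  case False
  then have x0: "0 < x" using x by simp
  have "(if x \<le> real (floor_pow a m) then x\<^sup>2 / real (floor_pow a m) else 0)
          \<le> 2 * x\<^sup>2 * (if x \<le> a ^ m then 1 / a ^ m else 0)" for m
  proof (cases "x \<le> real (floor_pow a m)")
    case True
    note bounds = floor_pow_bounds[of a m]
    have "a ^ m * x\<^sup>2 \<le> (2 * real (floor_pow a m)) * x\<^sup>2"
      using bounds a by (intro mult_right_mono) auto
    then have "x\<^sup>2 / real (floor_pow a m) \<le> 2 * x\<^sup>2 * (1 / a ^ m)"
      using floor_pow_pos[of a m] a by (simp add: field_simps)
    moreover have "x \<le> a ^ m" using True bounds a by linarith
    ultimately show ?thesis using True by simp
  qed simp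
  then have "(\<Sum>m<n. if x \<le> real (floor_pow a m) then x\<^sup>2 / real (floor_pow a m) else 0)
        \<le> 2 * x\<^sup>2 * (\<Sum>m<n. if x \<le> a ^ m then 1 / a ^ m else 0)"
    by (simp add: sum_distrib_left sum_mono)
  also have "\<dots> \<le> 2 * x\<^sup>2 * (a / (a - 1) / x)"
    by (intro mult_left_mono sum_inverse_powers_above_le a x0) simp
  also have "\<dots> = 2 * a / (a - 1) * x" using x0 a by (simp add: field_simps power2_eq_square)
  finally show ?thesis .
qed simp

lemma exists_bracketing_index:
  fixes k :: "nat \<Rightarrow> nat"
  assumes "k M \<le> n" and "\<exists>m\<ge>M. n < k m"
  shows "\<exists>m\<ge>M. k m \<le> n \<and> n < k (Suc m)"
proof -
  define m' where "m' = (LEAST m'. M \<le> m' \<and> n < k m')"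
  have m': "M \<le> m'" "n < k m'"
    using LeastI_ex[OF assms(2)] unfolding m'_def by auto
  with assms(1) have "M < m'" by (cases "m' = M") auto
  then obtain m where m: "m' = Suc m" "M \<le> m" by (cases m') auto
  then have "\<not> (M \<le> m \<and> n < k m)"
    using not_less_Least[of m "\<lambda>m'. M \<le> m' \<and> n < k m'"] unfolding m'_def by auto
  then show ?thesis using m m' by auto
qed

lemma floor_pow_bracket:
  assumes a: "1 < a" and "floor_pow a M \<le> n"
  shows "\<exists>m\<ge>M. floor_pow a m \<le> n \<and> n < floor_pow a (Suc m)"
proof (rule exists_bracketing_index[where k="floor_pow a", OF assms(2)])
  have "eventually (\<lambda>m. M \<le> m \<and> Suc n \<le> floor_pow a m) sequentially"
    using filterlim_floor_pow[OF a] unfolding filterlim_at_top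
    by (intro eventually_conj eventually_ge_at_top) auto
  then show "\<exists>m\<ge>M. n < floor_pow a m" unfolding eventually_sequentially by (metis Suc_le_lessD order_refl)
qed

lemma floor_pow_subsequence_bounds:
  fixes T :: "nat \<Rightarrow> real"
  assumes a: "1 < a" and mono: "incseq T" and nonneg: "\<And>n. 0 \<le> T n"
    and lim: "(\<lambda>m. T (floor_pow a m) / real (floor_pow a m)) \<longlonglongrightarrow> \<mu>" and \<eta>: "0 < \<eta>"
  shows "eventually (\<lambda>n. T n / real n \<le> a\<^sup>2 * (\<mu> + \<eta>) \<and> \<mu> - \<eta> \<le> a\<^sup>2 * (T n / real n)) sequentially"
proof -
  define k where "k = floor_pow a"
  have k_pos: "0 < real (k m)" for m unfolding k_def using floor_pow_pos a by simp
  obtain M1 where M1: "\<And>m. m \<ge> M1 \<Longrightarrow> \<bar>T (k m) / real (k m) - \<mu>\<bar> < \<eta>"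
    using LIMSEQ_D[OF lim \<eta>] unfolding k_def by auto
  obtain M2 where M2: "\<And>m. m \<ge> M2 \<Longrightarrow> real (k (Suc m)) \<le> a\<^sup>2 * real (k m)"
    using floor_pow_Suc_le[OF a] unfolding k_def eventually_sequentially by blast
  show ?thesis unfolding eventually_sequentially
  proof (intro exI allI impI)
    fix n assume "k (max M1 M2) \<le> n"
    then obtain m where m: "max M1 M2 \<le> m" "k m \<le> n" "n < k (Suc m)"
      using floor_pow_bracket[OF a] unfolding k_def by blast
    have n: "0 < real n" using k_pos[of m] m(2) by linarith
    have ratio: "real (k (Suc m)) / real (k m) \<le> a\<^sup>2"
      using M2[of m] m(1) k_pos[of m] by (simp add: divide_le_eq)
    have near: "\<bar>T (k m') / real (k m') - \<mu>\<bar> < \<eta>" if "m' \<ge> m" for m'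
      using M1 m(1) that by simp
    have "T n / real n \<le> T (k (Suc m)) / real (k m)"
      using incseqD[OF mono, of n "k (Suc m)"] m n nonneg k_pos[of m] by (intro frac_le) auto
    also have "\<dots> = T (k (Suc m)) / real (k (Suc m)) * (real (k (Suc m)) / real (k m))"
      using k_pos[of "Suc m"] by simp
    also have "\<dots> \<le> (\<mu> + \<eta>) * a\<^sup>2"
    proof (intro mult_mono ratio)
      have "0 \<le> T (k (Suc m)) / real (k (Suc m))" using nonneg k_pos by simp
      then show "0 \<le> \<mu> + \<eta>" and "T (k (Suc m)) / real (k (Suc m)) \<le> \<mu> + \<eta>"
        using near[of "Suc m"] by (auto simp: abs_less_iff)
    qed (use k_pos in simp)
    finally have upper: "T n / real n \<le> a\<^sup>2 * (\<mu> + \<eta>)" by (simp add: mult.commute)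
    have "\<mu> - \<eta> \<le> T (k m) / real (k m)" using near[of m] by simp
    also have "\<dots> = T (k m) / real (k (Suc m)) * (real (k (Suc m)) / real (k m))"
      using k_pos[of "Suc m"] by simp
    also have "\<dots> \<le> T n / real n * a\<^sup>2"
    proof (intro mult_mono ratio)
      show "T (k m) / real (k (Suc m)) \<le> T n / real n"
        using incseqD[OF mono, of "k m" n] m n nonneg by (intro frac_le) auto
    qed (use nonneg n in auto)
    finally show "T n / real n \<le> a\<^sup>2 * (\<mu> + \<eta>) \<and> \<mu> - \<eta> \<le> a\<^sup>2 * (T n / real n)"
      using upper by (simp add: mult.commute)
  qed
qed

text \<open>Etemadi's device: monotonicity interpolates between the sparse subsequences \<open>\<lfloor>a\<^sup>m\<rfloor>\<close>,
  at the price of a factor \<open>a\<^sup>2\<close> that tends to \<open>1\<close> along the family \<open>a = 1 + 1 / (j + 1)\<close>.\<close>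

lemma incseq_over_n_tendsto_if_floor_pow_subsequences:
  fixes T :: "nat \<Rightarrow> real"
  assumes mono: "incseq T" and nonneg: "\<And>n. 0 \<le> T n"
    and lim: "\<And>j. (\<lambda>m. T (floor_pow (1 + 1 / real (Suc j)) m)
                      / real (floor_pow (1 + 1 / real (Suc j)) m)) \<longlonglongrightarrow> \<mu>"
  shows "(\<lambda>n. T n / real n) \<longlonglongrightarrow> \<mu>"
proof -
  have scale_lim: "(\<lambda>j. (1 + 1 / real (Suc j))\<^sup>2 * c) \<longlonglongrightarrow> c" for c :: real
  proof -
    have "(\<lambda>j. (1 + inverse (real (Suc j)))\<^sup>2 * c) \<longlonglongrightarrow> (1 + 0)\<^sup>2 * c"
      by (intro tendsto_intros LIMSEQ_inverse_real_of_nat)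
    then show ?thesis by (simp add: inverse_eq_divide)
  qed
  have bounds: "eventually (\<lambda>n. T n / real n \<le> (1 + 1 / real (Suc j))\<^sup>2 * (\<mu> + \<eta>) \<and>
      \<mu> - \<eta> \<le> (1 + 1 / real (Suc j))\<^sup>2 * (T n / real n)) sequentially" if "0 < \<eta>" for j \<eta>
    by (rule floor_pow_subsequence_bounds[OF _ mono nonneg lim that]) simp
  show ?thesis
  proof (rule order_tendstoI)
    fix b assume "b < \<mu>"
    then have "eventually (\<lambda>j. (1 + 1 / real (Suc j))\<^sup>2 * b < \<mu> - (\<mu> - b) / 2) sequentially"
      by (intro order_tendstoD(2)[OF scale_lim]) (simp add: field_simps)
    then obtain j where j: "(1 + 1 / real (Suc j))\<^sup>2 * b < \<mu> - (\<mu> - b) / 2"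
      by (meson eventually_sequentially order_refl)
    have "0 < (\<mu> - b) / 2" using \<open>b < \<mu>\<close> by simp
    from bounds[OF this, of j] show "eventually (\<lambda>n. b < T n / real n) sequentially"
    proof eventually_elim
      case (elim n)
      then have "(1 + 1 / real (Suc j))\<^sup>2 * b < (1 + 1 / real (Suc j))\<^sup>2 * (T n / real n)"
        using j by linarith
      then show ?case by (rule mult_left_less_imp_less) simp
    qed
  next
    fix b assume "\<mu> < b"
    then have "eventually (\<lambda>j. (1 + 1 / real (Suc j))\<^sup>2 * (\<mu> + (b - \<mu>) / 2) < b) sequentially"
      by (intro order_tendstoD(2)[OF scale_lim]) (simp add: field_simps)
    then obtain j where j: "(1 + 1 / real (Suc j))\<^sup>2 * (\<mu> + (b - \<mu>) / 2) < b"
      by (meson eventually_sequentially order_refl)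
    have "0 < (b - \<mu>) / 2" using \<open>\<mu> < b\<close> by simp
    from bounds[OF this, of j] show "eventually (\<lambda>n. T n / real n < b) sequentially"
      by eventually_elim (use j in linarith)
  qed
qed

lemma sum_indicator_greaterThan_le:
  fixes x :: real
  assumes "0 \<le> x"
  shows "(\<Sum>i<n. indicator {real (Suc i)<..} x) \<le> x"
proof -
  have "(\<Sum>i<n. indicator {real (Suc i)<..} x :: real) \<le> min (real n) x"
    by (induction n) (use assms in \<open>auto simp: indicator_def\<close>)
  then show ?thesis by simp
qed

locale pairwise_iid_nonneg = prob_space +
  fixes X :: "nat \<Rightarrow> 'a \<Rightarrow> real"
  assumes X_rv[measurable]: "\<And>i. random_variable borel (X i)"
    and X_indep: "\<And>i j. i \<noteq> j \<Longrightarrow> indep_var borel (X i) borel (X j)"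
    and X_ident: "\<And>i. distr M borel (X i) = distr M borel (X 0)"
    and X_integrable: "integrable M (X 0)"
    and X_nonneg: "\<And>i x. x \<in> space M \<Longrightarrow> 0 \<le> X i x"
begin

lemma integral_X_eq:
  fixes g :: "real \<Rightarrow> real"
  assumes [measurable]: "g \<in> borel_measurable borel"
  shows "(\<integral>x. g (X i x) \<partial>M) = (\<integral>x. g (X 0 x) \<partial>M)"
proof -
  have "(\<integral>x. g (X i x) \<partial>M) = integral\<^sup>L (distr M borel (X i)) g" by (rule integral_distr[symmetric]) auto
  also have "\<dots> = integral\<^sup>L (distr M borel (X 0)) g" by (simp only: X_ident[of i])
  also have "\<dots> = (\<integral>x. g (X 0 x) \<partial>M)" by (rule integral_distr) auto
  finally show ?thesis .
qed

definition cut :: "nat \<Rightarrow> real \<Rightarrow> real" where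
  "cut i y = (if y \<le> real (Suc i) then y else 0)"

definition trunc :: "nat \<Rightarrow> 'a \<Rightarrow> real" where
  "trunc i x = cut i (X i x)"

definition trunc_sum :: "nat \<Rightarrow> 'a \<Rightarrow> real" where
  "trunc_sum n x = (\<Sum>i<n. trunc i x)"

definition trunc_mean :: "nat \<Rightarrow> real" where
  "trunc_mean n = (\<Sum>i<n. expectation (trunc i))"

definition trunc_moment2 :: "nat \<Rightarrow> real" where
  "trunc_moment2 n = (\<integral>x. (if X 0 x \<le> real n then (X 0 x)\<^sup>2 else 0) \<partial>M)"

lemma cut_measurable[measurable]: "cut i \<in> borel_measurable borel"
  unfolding cut_def by measurable

lemma trunc_measurable[measurable]: "random_variable borel (trunc i)"
  unfolding trunc_def by measurable

lemma trunc_sum_measurable[measurable]: "random_variable borel (trunc_sum n)"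
  unfolding trunc_sum_def by measurable

lemma trunc_bounds: "x \<in> space M \<Longrightarrow> 0 \<le> trunc i x \<and> trunc i x \<le> real (Suc i)"
  using X_nonneg[of x i] unfolding trunc_def cut_def by auto

lemma integrable_bounded:
  fixes f :: "'a \<Rightarrow> real"
  assumes "f \<in> borel_measurable M" "\<And>x. x \<in> space M \<Longrightarrow> \<bar>f x\<bar> \<le> B"
  shows "integrable M f"
  using assms by (intro integrable_const_bound[of _ B]) auto

lemma trunc_integrable: "integrable M (trunc i)"
  by (rule integrable_bounded[of _ "real (Suc i)"]) (use trunc_bounds in auto)

lemma incseq_trunc_sum: "x \<in> space M \<Longrightarrow> incseq (\<lambda>n. trunc_sum n x)"
  unfolding trunc_sum_def using trunc_bounds by (intro incseq_SucI) simp

text \<open>Borel-Cantelli: \<open>\<Sum>\<^sub>i P(X\<^sub>i > i + 1) \<le> E X\<^sub>0 < \<infinity>\<close>.\<close>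

lemma AE_eventually_X_eq_trunc: "AE x in M. eventually (\<lambda>n. X n x = trunc n x) sequentially"
proof -
  define A where "A i = {x \<in> space M. real (Suc i) < X i x}" for i
  have [measurable]: "A i \<in> sets M" for i unfolding A_def by measurable
  have ind_integrable: "integrable M (\<lambda>x. indicator {real (Suc i)<..} (X 0 x) :: real)" for i
    by (rule integrable_bounded[of _ 1]) (auto simp: indicator_def)
  have measure_A: "measure M (A i) = (\<integral>x. indicator {real (Suc i)<..} (X 0 x) \<partial>M)" for i
  proof -
    have "measure M (A i) = (\<integral>x. indicator (A i) x \<partial>M)" by simp
    also have "\<dots> = (\<integral>x. indicator {real (Suc i)<..} (X i x) \<partial>M)"
      by (intro Bochner_Integration.integral_cong) (auto simp: A_def indicator_def)
    also have "\<dots> = (\<integral>x. indicator {real (Suc i)<..} (X 0 x) \<partial>M)"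
      by (rule integral_X_eq) measurable
    finally show ?thesis .
  qed
  have "summable (\<lambda>i. measure M (A i))"
  proof (rule summableI_nonneg_bounded)
    fix n
    have "(\<Sum>i<n. measure M (A i)) = (\<integral>x. (\<Sum>i<n. indicator {real (Suc i)<..} (X 0 x)) \<partial>M)"
      unfolding measure_A by (rule Bochner_Integration.integral_sum[symmetric]) (rule ind_integrable)
    also have "\<dots> \<le> expectation (X 0)"
      using X_integrable ind_integrable X_nonneg sum_indicator_greaterThan_le
      by (intro integral_mono) auto
    finally show "(\<Sum>i<n. measure M (A i)) \<le> expectation (X 0)" .
  qed simp
  then have "AE x in M. eventually (\<lambda>n. x \<in> space M - A n) sequentially"
    by (intro borel_cantelli_AE1) (auto simp: less_top[symmetric])
  then show ?thesis
    by (rule AE_mp) (auto simp: A_def trunc_def cut_def elim!: eventually_mono intro!: AE_I2)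
qed

lemma trunc_mean_over_n_tendsto: "(\<lambda>n. trunc_mean n / real n) \<longlonglongrightarrow> expectation (X 0)"
  unfolding trunc_mean_def
proof (rule cesaro_mean_tendsto)
  have "(\<lambda>i. \<integral>x. cut i (X 0 x) \<partial>M) \<longlonglongrightarrow> expectation (X 0)"
  proof (rule integral_dominated_convergence[where w="\<lambda>x. \<bar>X 0 x\<bar>"])
    show "AE x in M. (\<lambda>i. cut i (X 0 x)) \<longlonglongrightarrow> X 0 x"
    proof (rule AE_I2, rule tendsto_eventually)
      fix x
      obtain n :: nat where "X 0 x \<le> real n" using real_arch_simple by blast
      then show "eventually (\<lambda>i. cut i (X 0 x) = X 0 x) sequentially"
        unfolding eventually_sequentially cut_def by (intro exI[of _ n]) auto
    qed
  qed (use X_integrable in \<open>auto simp: cut_def\<close>)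
  moreover have "expectation (trunc i) = (\<integral>x. cut i (X 0 x) \<partial>M)" for i
    unfolding trunc_def by (rule integral_X_eq) measurable
  ultimately show "(\<lambda>i. expectation (trunc i)) \<longlonglongrightarrow> expectation (X 0)" by simp
qed

lemma indep_var_trunc:
  assumes "i \<noteq> j"
  shows "indep_var borel (trunc i) borel (trunc j)"
  using indep_var_compose[OF X_indep[OF assms] cut_measurable cut_measurable]
  by (simp add: comp_def trunc_def[abs_def])

lemma variance_trunc_le:
  assumes "i < n"
  shows "variance (trunc i) \<le> trunc_moment2 n"
proof -
  have "variance (trunc i) = expectation (\<lambda>x. (trunc i x)\<^sup>2) - (expectation (trunc i))\<^sup>2"
    by (rule variance_eq[OF trunc_integrable])
       (rule integrable_bounded[of _ "(real (Suc i))\<^sup>2"], use trunc_bounds in \<open>auto intro!: power_mono\<close>)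
  also have "\<dots> \<le> (\<integral>x. (cut i (X 0 x))\<^sup>2 \<partial>M)"
    unfolding trunc_def by (subst integral_X_eq[of "\<lambda>y. (cut i y)\<^sup>2"]) auto
  also have "\<dots> \<le> trunc_moment2 n"
    unfolding trunc_moment2_def
  proof (rule integral_mono)
    show "integrable M (\<lambda>x. (cut i (X 0 x))\<^sup>2)"
      by (rule integrable_bounded[of _ "(real (Suc i))\<^sup>2"])
         (use X_nonneg in \<open>auto simp: cut_def intro!: power_mono\<close>)
    show "integrable M (\<lambda>x. if X 0 x \<le> real n then (X 0 x)\<^sup>2 else 0)"
      by (rule integrable_bounded[of _ "(real n)\<^sup>2"]) (use X_nonneg in \<open>auto intro!: power_mono\<close>)
    show "(cut i (X 0 x))\<^sup>2 \<le> (if X 0 x \<le> real n then (X 0 x)\<^sup>2 else 0)" if "x \<in> space M" for x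
      using assms X_nonneg[OF that, of 0] by (auto simp: cut_def)
  qed
  finally show ?thesis .
qed

definition centered :: "nat \<Rightarrow> 'a \<Rightarrow> real" where
  "centered i x = trunc i x - expectation (trunc i)"

lemma centered_measurable[measurable]: "random_variable borel (centered i)"
  unfolding centered_def by measurable

lemma integrable_centered: "integrable M (centered i)"
  unfolding centered_def using trunc_integrable by simp

lemma expectation_centered: "expectation (centered i) = 0"
  unfolding centered_def using trunc_integrable by (simp add: prob_space)

lemma integrable_centered_product: "integrable M (\<lambda>x. centered i x * centered j x)"
proof (rule integrable_bounded[of _ "(real (Suc i) + \<bar>expectation (trunc i)\<bar>) * (real (Suc j) + \<bar>expectation (trunc j)\<bar>)"])
  fix x assume "x \<in> space M"
  then have "\<bar>centered t x\<bar> \<le> real (Suc t) + \<bar>expectation (trunc t)\<bar>" for t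
    using trunc_bounds[of x t] unfolding centered_def by linarith
  then show "\<bar>centered i x * centered j x\<bar>
      \<le> (real (Suc i) + \<bar>expectation (trunc i)\<bar>) * (real (Suc j) + \<bar>expectation (trunc j)\<bar>)"
    unfolding abs_mult by (intro mult_mono) auto
qed measurable

lemma centered_uncorrelated:
  assumes "i \<noteq> j"
  shows "expectation (\<lambda>x. centered i x * centered j x) = 0"
proof -
  have "indep_var borel ((\<lambda>y. y - expectation (trunc i)) \<circ> trunc i) borel ((\<lambda>y. y - expectation (trunc j)) \<circ> trunc j)"
    by (rule indep_var_compose[OF indep_var_trunc[OF assms]]) measurable
  then have "indep_var borel (centered i) borel (centered j)" by (simp add: comp_def centered_def[abs_def])
  then have "expectation (\<lambda>x. centered i x * centered j x) = expectation (centered i) * expectation (centered j)"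
    by (rule indep_var_lebesgue_integral) (rule integrable_centered)+
  then show ?thesis by (simp add: expectation_centered)
qed

lemma variance_trunc_sum_le: "variance (trunc_sum n) \<le> real n * trunc_moment2 n"
proof -
  have "expectation (trunc_sum n) = trunc_mean n"
    unfolding trunc_sum_def trunc_mean_def by (simp add: trunc_integrable)
  moreover have "trunc_sum n x - trunc_mean n = (\<Sum>i<n. centered i x)" for x
    unfolding trunc_sum_def trunc_mean_def centered_def by (simp add: sum_subtractf)
  ultimately have "variance (trunc_sum n) = (\<integral>x. (\<Sum>i<n. \<Sum>j<n. centered i x * centered j x) \<partial>M)"
    by (simp add: power2_eq_square sum_product)
  also have "\<dots> = (\<Sum>i<n. \<Sum>j<n. expectation (\<lambda>x. centered i x * centered j x))"
    by (simp add: integrable_centered_product)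
  also have "\<dots> = (\<Sum>i<n. expectation (\<lambda>x. centered i x * centered i x))"
  proof (intro sum.cong refl)
    fix i assume "i \<in> {..<n}"
    then have "(\<Sum>j<n. expectation (\<lambda>x. centered i x * centered j x))
        = (\<Sum>j\<in>{i}. expectation (\<lambda>x. centered i x * centered j x))"
      using centered_uncorrelated by (intro sum.mono_neutral_right) auto
    then show "(\<Sum>j<n. expectation (\<lambda>x. centered i x * centered j x)) = expectation (\<lambda>x. centered i x * centered i x)"
      by simp
  qed
  also have "\<dots> = (\<Sum>i<n. variance (trunc i))" by (simp add: centered_def power2_eq_square)
  also have "\<dots> \<le> (\<Sum>i<n. trunc_moment2 n)" by (intro sum_mono variance_trunc_le) simp
  finally show ?thesis by simp
qed

lemma summable_trunc_moment2_over_floor_pow: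
  assumes a: "1 < a"
  shows "summable (\<lambda>m. trunc_moment2 (floor_pow a m) / real (floor_pow a m))"
proof (rule summableI_nonneg_bounded)
  define k where "k = floor_pow a"
  have k_pos: "0 < real (k m)" for m unfolding k_def using floor_pow_pos a by simp
  have term_integrable: "integrable M (\<lambda>x. (if X 0 x \<le> real (k m) then (X 0 x)\<^sup>2 else 0) / real (k m))" for m
    by (rule integrable_bounded[of _ "(real (k m))\<^sup>2 / real (k m)"])
       (use X_nonneg k_pos in \<open>auto intro!: divide_right_mono power_mono\<close>)
  fix n
  have "(\<Sum>m<n. trunc_moment2 (k m) / real (k m))
      = (\<integral>x. (\<Sum>m<n. (if X 0 x \<le> real (k m) then (X 0 x)\<^sup>2 else 0) / real (k m)) \<partial>M)"
    unfolding trunc_moment2_def by (simp add: term_integrable)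
  also have "\<dots> \<le> (\<integral>x. 2 * a / (a - 1) * X 0 x \<partial>M)"
  proof (rule integral_mono)
    fix x assume "x \<in> space M"
    then show "(\<Sum>m<n. (if X 0 x \<le> real (k m) then (X 0 x)\<^sup>2 else 0) / real (k m)) \<le> 2 * a / (a - 1) * X 0 x"
      using sum_truncated_square_over_floor_pow_le[OF a X_nonneg] unfolding k_def
      by (simp add: if_distrib[of "\<lambda>y. y / _"] cong: if_cong)
  qed (use X_integrable term_integrable in auto)
  finally show "(\<Sum>m<n. trunc_moment2 (k m) / real (k m)) \<le> 2 * a / (a - 1) * expectation (X 0)"
    by simp
next
  show "0 \<le> trunc_moment2 (floor_pow a m) / real (floor_pow a m)" for m
    unfolding trunc_moment2_def by (intro divide_nonneg_nonneg integral_nonneg_AE) auto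
qed

lemma AE_trunc_sum_floor_pow_deviation:
  assumes a: "1 < a" and \<epsilon>: "0 < \<epsilon>"
  shows "AE x in M. eventually (\<lambda>m. \<bar>trunc_sum (floor_pow a m) x - trunc_mean (floor_pow a m)\<bar>
                                       < \<epsilon> * real (floor_pow a m)) sequentially"
proof -
  define k where "k = floor_pow a"
  have k_pos: "0 < real (k m)" for m unfolding k_def using floor_pow_pos a by simp
  define B where "B m = {x \<in> space M. \<epsilon> * real (k m) \<le> \<bar>trunc_sum (k m) x - trunc_mean (k m)\<bar>}" for m
  have [measurable]: "B m \<in> sets M" for m unfolding B_def by measurable
  have measure_B: "measure M (B m) \<le> 1 / \<epsilon>\<^sup>2 * (trunc_moment2 (k m) / real (k m))" for m
  proof -
    have "expectation (trunc_sum (k m)) = trunc_mean (k m)"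
      unfolding trunc_sum_def trunc_mean_def by (simp add: trunc_integrable)
    moreover have "integrable M (\<lambda>x. (trunc_sum (k m) x)\<^sup>2)"
      by (rule integrable_bounded[of _ "(\<Sum>i<k m. real (Suc i))\<^sup>2"])
         (use trunc_bounds in \<open>auto simp: trunc_sum_def intro!: power_mono sum_mono sum_nonneg\<close>)
    ultimately have "measure M (B m) \<le> variance (trunc_sum (k m)) / (\<epsilon> * real (k m))\<^sup>2"
      using Chebyshev_inequality[of "trunc_sum (k m)" "\<epsilon> * real (k m)"] \<epsilon> k_pos
      unfolding B_def by simp
    also have "\<dots> \<le> real (k m) * trunc_moment2 (k m) / (\<epsilon> * real (k m))\<^sup>2"
      by (intro divide_right_mono variance_trunc_sum_le) simp
    also have "\<dots> = 1 / \<epsilon>\<^sup>2 * (trunc_moment2 (k m) / real (k m))"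
      using k_pos[of m] \<epsilon> by (simp add: power2_eq_square field_simps)
    finally show ?thesis .
  qed
  have "summable (\<lambda>m. measure M (B m))"
  proof (rule summable_comparison_test')
    show "summable (\<lambda>m. 1 / \<epsilon>\<^sup>2 * (trunc_moment2 (k m) / real (k m)))"
      unfolding k_def by (intro summable_mult summable_trunc_moment2_over_floor_pow a)
  qed (use measure_B in simp)
  then have "AE x in M. eventually (\<lambda>m. x \<in> space M - B m) sequentially"
    by (intro borel_cantelli_AE1) (auto simp: less_top[symmetric])
  then show ?thesis
    by (rule AE_mp) (auto simp: B_def k_def not_le elim!: eventually_mono intro!: AE_I2)
qed

lemma AE_trunc_sum_floor_pow_tendsto:
  assumes a: "1 < a"
  shows "AE x in M. (\<lambda>m. trunc_sum (floor_pow a m) x / real (floor_pow a m)) \<longlonglongrightarrow> expectation (X 0)"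
proof -
  define k where "k = floor_pow a"
  have k_pos: "0 < real (k m)" for m unfolding k_def using floor_pow_pos a by simp
  have "AE x in M. \<forall>e::nat. eventually (\<lambda>m. \<bar>trunc_sum (k m) x - trunc_mean (k m)\<bar>
                                           < 1 / real (Suc e) * real (k m)) sequentially"
    unfolding AE_all_countable k_def by (intro allI AE_trunc_sum_floor_pow_deviation a) simp
  then show ?thesis
  proof eventually_elim
    case (elim x)
    have "(\<lambda>m. (trunc_sum (k m) x - trunc_mean (k m)) / real (k m)) \<longlonglongrightarrow> 0"
    proof (rule LIMSEQ_I)
      fix r :: real assume "0 < r"
      then obtain e :: nat where e: "1 / real (Suc e) < r"
        using reals_Archimedean by (metis of_nat_Suc inverse_eq_divide)
      obtain m0 where m0: "\<And>m. m \<ge> m0 \<Longrightarrow>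
          \<bar>trunc_sum (k m) x - trunc_mean (k m)\<bar> < 1 / real (Suc e) * real (k m)"
        using elim[rule_format, of e] unfolding eventually_sequentially by blast
      show "\<exists>no. \<forall>m\<ge>no. norm ((trunc_sum (k m) x - trunc_mean (k m)) / real (k m) - 0) < r"
      proof (intro exI allI impI)
        fix m assume "m \<ge> m0"
        then have "\<bar>trunc_sum (k m) x - trunc_mean (k m)\<bar> / real (k m) < 1 / real (Suc e)"
          using m0 k_pos[of m] by (simp add: divide_less_eq)
        then show "norm ((trunc_sum (k m) x - trunc_mean (k m)) / real (k m) - 0) < r"
          using e by (simp add: abs_divide)
      qed
    qed
    moreover have "(\<lambda>m. trunc_mean (k m) / real (k m)) \<longlonglongrightarrow> expectation (X 0)"
      using filterlim_compose[OF trunc_mean_over_n_tendsto filterlim_floor_pow[OF a]]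
      unfolding k_def by (simp add: comp_def)
    ultimately have "(\<lambda>m. (trunc_sum (k m) x - trunc_mean (k m)) / real (k m) + trunc_mean (k m) / real (k m))
        \<longlonglongrightarrow> 0 + expectation (X 0)" by (rule tendsto_add)
    then show ?case unfolding k_def by (simp add: diff_divide_distrib)
  qed
qed

theorem cesaro_mean_X_tendsto: "AE x in M. (\<lambda>n. (\<Sum>i<n. X i x) / real n) \<longlonglongrightarrow> expectation (X 0)"
proof -
  have "AE x in M. \<forall>j. (\<lambda>m. trunc_sum (floor_pow (1 + 1 / real (Suc j)) m) x
                          / real (floor_pow (1 + 1 / real (Suc j)) m)) \<longlonglongrightarrow> expectation (X 0)"
    unfolding AE_all_countable by (intro allI AE_trunc_sum_floor_pow_tendsto) simp
  with AE_eventually_X_eq_trunc AE_space show ?thesis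
  proof eventually_elim
    case (elim x)
    have "(\<lambda>n. trunc_sum n x / real n) \<longlonglongrightarrow> expectation (X 0)"
      using elim(3) incseq_trunc_sum[OF elim(2)] trunc_bounds[OF elim(2)]
      by (intro incseq_over_n_tendsto_if_floor_pow_subsequences) (auto simp: trunc_sum_def intro: sum_nonneg)
    then show ?case unfolding trunc_sum_def by (rule cesaro_mean_eventually_eq[OF elim(1)])
  qed
qed

end

theorem (in prob_space) strong_law_of_large_numbers:
  fixes X :: "nat \<Rightarrow> 'a \<Rightarrow> real"
  assumes rv[measurable]: "\<And>i. random_variable borel (X i)"
    and indep: "\<And>i j. i \<noteq> j \<Longrightarrow> indep_var borel (X i) borel (X j)"
    and ident: "\<And>i. distr M borel (X i) = distr M borel (X 0)"
    and int: "integrable M (X 0)"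
  shows "AE x in M. (\<lambda>n. (\<Sum>i<n. X i x) / real n) \<longlonglongrightarrow> expectation (X 0)"
proof -
  have part: "AE x in M. (\<lambda>n. (\<Sum>i<n. f (X i x)) / real n) \<longlonglongrightarrow> expectation (\<lambda>x. f (X 0 x))"
    if f[measurable]: "f \<in> borel_measurable borel" and f_nonneg: "\<And>y. 0 \<le> f y"
      and f_int: "integrable M (\<lambda>x. f (X 0 x))" for f :: "real \<Rightarrow> real"
  proof -
    interpret pairwise_iid_nonneg M "\<lambda>i x. f (X i x)"
    proof
      show "indep_var borel (\<lambda>x. f (X i x)) borel (\<lambda>x. f (X j x))" if "i \<noteq> j" for i j
        using indep_var_compose[OF indep[OF that] f f] by (simp add: comp_def)
      show "distr M borel (\<lambda>x. f (X i x)) = distr M borel (\<lambda>x. f (X 0 x))" for i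
        using distr_distr[of f borel borel "X i" M] distr_distr[of f borel borel "X 0" M]
        by (simp add: comp_def ident[of i])
    qed (use f_int f_nonneg in auto)
    show ?thesis by (rule cesaro_mean_X_tendsto)
  qed
  have pos: "AE x in M. (\<lambda>n. (\<Sum>i<n. max (X i x) 0) / real n) \<longlonglongrightarrow> expectation (\<lambda>x. max (X 0 x) 0)"
    by (rule part) (use int in auto)
  have neg: "AE x in M. (\<lambda>n. (\<Sum>i<n. max (- X i x) 0) / real n) \<longlonglongrightarrow> expectation (\<lambda>x. max (- X 0 x) 0)"
    by (rule part[of "\<lambda>y. max (- y) 0"]) (use int in auto)
  have "expectation (X 0) = expectation (\<lambda>x. max (X 0 x) 0 - max (- X 0 x) 0)"
    by (intro Bochner_Integration.integral_cong) auto
  also have "\<dots> = expectation (\<lambda>x. max (X 0 x) 0) - expectation (\<lambda>x. max (- X 0 x) 0)"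
    by (rule Bochner_Integration.integral_diff) (use int in auto)
  finally have E: "expectation (X 0) = \<dots>" .
  from pos neg show ?thesis
  proof eventually_elim
    case (elim x)
    then have "(\<lambda>n. (\<Sum>i<n. max (X i x) 0) / real n - (\<Sum>i<n. max (- X i x) 0) / real n)
        \<longlonglongrightarrow> expectation (X 0)" unfolding E by (rule tendsto_diff)
    moreover have "(\<Sum>i<n. max (X i x) 0) - (\<Sum>i<n. max (- X i x) 0) = (\<Sum>i<n. X i x)" for n
      by (simp add: sum_subtractf[symmetric]) (intro sum.cong, auto)
    ultimately show ?case by (simp add: diff_divide_distrib[symmetric])
  qed
qed

lemma (in prob_space) sample_mean_tendsto:
  fixes \<xi> :: "nat \<Rightarrow> 'a \<Rightarrow> 'x" and h :: "'x \<Rightarrow> real"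
  assumes distr: "\<And>i. i \<ge> 1 \<Longrightarrow> distributed M \<nu> (\<xi> i) g"
    and indep: "indep_vars (\<lambda>_. \<nu>) \<xi> {1..}"
    and h[measurable]: "h \<in> borel_measurable \<nu>"
    and h_integrable: "integrable (density \<nu> g) h"
  shows "AE \<omega> in M. (\<lambda>n. (\<Sum>j<n. h (\<xi> (Suc j) \<omega>)) / real n) \<longlonglongrightarrow> integral\<^sup>L (density \<nu> g) h"
proof -
  have \<xi>[measurable]: "\<xi> (Suc j) \<in> measurable M \<nu>" for j
    using distr[of "Suc j"] unfolding distributed_def by simp
  have distr_\<xi>: "distr M \<nu> (\<xi> (Suc j)) = density \<nu> g" for j
    using distr[of "Suc j"] unfolding distributed_def by simp
  define Y where "Y j \<omega> = h (\<xi> (Suc j) \<omega>)" for j \<omega>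
  have [measurable]: "random_variable borel (Y j)" for j unfolding Y_def by measurable
  have "indep_var borel (Y i) borel (Y j)" if "i \<noteq> j" for i j
  proof -
    have component: "(\<lambda>y. h (y t)) \<in> borel_measurable (PiM {t} (\<lambda>_. \<nu>))" for t
      using measurable_component_singleton[of t "{t}" "\<lambda>_. \<nu>"] by measurable
    have "indep_var (PiM {Suc i} (\<lambda>_. \<nu>)) (\<lambda>\<omega>. restrict (\<lambda>t. \<xi> t \<omega>) {Suc i})
                    (PiM {Suc j} (\<lambda>_. \<nu>)) (\<lambda>\<omega>. restrict (\<lambda>t. \<xi> t \<omega>) {Suc j})"
      using that by (intro indep_var_restrict[OF indep]) auto
    from indep_var_compose[OF this component component]
    show ?thesis by (simp add: comp_def Y_def[abs_def])
  qed
  moreover have "distr M borel (Y j) = distr (density \<nu> g) borel h" for j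
    unfolding Y_def distr_\<xi>[of j, symmetric] by (subst distr_distr) (auto simp: comp_def)
  moreover have "integrable M (Y 0)"
    using h_integrable integrable_distr_eq[OF \<xi> h] unfolding Y_def distr_\<xi> by simp
  ultimately have "AE \<omega> in M. (\<lambda>n. (\<Sum>j<n. Y j \<omega>) / real n) \<longlonglongrightarrow> expectation (Y 0)"
    by (intro strong_law_of_large_numbers) auto
  moreover have "expectation (Y 0) = integral\<^sup>L (density \<nu> g) h"
    unfolding Y_def distr_\<xi>[of 0, symmetric] by (rule integral_distr[OF \<xi> h, symmetric])
  ultimately show ?thesis unfolding Y_def by simp
qed

section \<open>Powers of principal submatrices\<close>

primrec block_pow :: "(nat \<Rightarrow> nat \<Rightarrow> real) \<Rightarrow> nat set \<Rightarrow> nat \<Rightarrow> nat \<Rightarrow> nat \<Rightarrow> real" where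
  "block_pow A C 0 l k = (if l = k then 1 else 0)"
| "block_pow A C (Suc t) l k = (\<Sum>j\<in>C. block_pow A C t l j * A j k)"

lemma block_pow_nonneg:
  assumes "\<And>l k. l \<in> C \<Longrightarrow> k \<in> C \<Longrightarrow> 0 \<le> A l k" "k \<in> C"
  shows "0 \<le> block_pow A C t l k"
  using assms(2) by (induction t arbitrary: k) (auto intro!: sum_nonneg mult_nonneg_nonneg assms(1))

lemma block_pow_add:
  assumes "finite C" "k \<in> C"
  shows "block_pow A C (a + b) l k = (\<Sum>j\<in>C. block_pow A C a l j * block_pow A C b j k)"
  using assms(2)
proof (induction b arbitrary: k)
  case 0
  then show ?case using assms(1) by (simp add: if_distrib[of "\<lambda>x. _ * x"] cong: if_cong)
next
  case (Suc b)
  have "block_pow A C (a + Suc b) l k = (\<Sum>j'\<in>C. (\<Sum>j\<in>C. block_pow A C a l j * block_pow A C b j j') * A j' k)"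
    using Suc.IH by simp
  also have "\<dots> = (\<Sum>j\<in>C. \<Sum>j'\<in>C. block_pow A C a l j * (block_pow A C b j j' * A j' k))"
    by (subst sum.swap) (simp add: sum_distrib_right mult.assoc)
  also have "\<dots> = (\<Sum>j\<in>C. block_pow A C a l j * block_pow A C (Suc b) j k)"
    by (simp add: sum_distrib_left)
  finally show ?case .
qed

lemma colsum_block_pow_Suc:
  "(\<Sum>l\<in>C. block_pow A C (Suc t) l k) = (\<Sum>j\<in>C. (\<Sum>l\<in>C. block_pow A C t l j) * A j k)"
  by (simp add: sum_distrib_right) (rule sum.swap)

lemma colsum_block_pow_1: "finite C \<Longrightarrow> (\<Sum>l\<in>C. block_pow A C (Suc 0) l k) = (\<Sum>l\<in>C. A l k)"
  by (intro sum.cong refl) (simp add: if_distrib[of "\<lambda>x. x * _"] cong: if_cong)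

lemma colsum_block_pow_le_1:
  assumes "finite C" and nonneg: "\<And>l k. l \<in> C \<Longrightarrow> k \<in> C \<Longrightarrow> 0 \<le> A l k"
    and colsum: "\<And>k. k \<in> C \<Longrightarrow> (\<Sum>l\<in>C. A l k) \<le> 1" and "k \<in> C"
  shows "(\<Sum>l\<in>C. block_pow A C t l k) \<le> 1"
  using \<open>k \<in> C\<close>
proof (induction t arbitrary: k)
  case (Suc t)
  have "(\<Sum>l\<in>C. block_pow A C (Suc t) l k) \<le> (\<Sum>j\<in>C. 1 * A j k)"
    unfolding colsum_block_pow_Suc using Suc nonneg by (intro sum_mono mult_right_mono) auto
  also have "\<dots> \<le> 1" using colsum[OF Suc.prems] by simp
  finally show ?case .
qed (use assms(1) in simp)

lemma colsum_block_pow_eq_1: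
  assumes "finite C" and colsum: "\<And>k. k \<in> C \<Longrightarrow> (\<Sum>l\<in>C. A l k) = 1" and "k \<in> C"
  shows "(\<Sum>l\<in>C. block_pow A C t l k) = 1"
  using \<open>k \<in> C\<close>
proof (induction t arbitrary: k)
  case (Suc t)
  have "(\<Sum>l\<in>C. block_pow A C (Suc t) l k) = (\<Sum>j\<in>C. A j k)"
    unfolding colsum_block_pow_Suc using Suc by (intro sum.cong) auto
  then show ?case using colsum[OF Suc.prems] by simp
qed (use assms(1) in simp)

lemma block_pow_pos_if_path:
  assumes "finite C" and nonneg: "\<And>l k. l \<in> C \<Longrightarrow> k \<in> C \<Longrightarrow> 0 \<le> A l k"
    and "(l, k) \<in> (edges_in A C)\<^sup>*"
  shows "\<exists>n. 0 < block_pow A C n l k"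
  using assms(3)
proof (induction rule: rtrancl_induct)
  case base
  show ?case by (intro exI[of _ 0]) simp
next
  case (step y z)
  then obtain n where n: "0 < block_pow A C n l y" by blast
  have yz: "y \<in> C" "z \<in> C" "0 < A y z" using step(2) unfolding edges_in_def by auto
  have "0 < block_pow A C n l y * A y z" using n yz by simp
  also have "\<dots> \<le> (\<Sum>j\<in>C. block_pow A C n l j * A j z)"
    using assms(1) yz nonneg block_pow_nonneg[of C A] by (intro member_le_sum) auto
  finally show ?case by (intro exI[of _ "Suc n"]) simp
qed

lemma block_pow_diag_pos_if_loop:
  assumes "finite C" and nonneg: "\<And>l k. l \<in> C \<Longrightarrow> k \<in> C \<Longrightarrow> 0 \<le> A l k"
    and "l \<in> C" "0 < A l l"
  shows "0 < block_pow A C t l l"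
proof (induction t)
  case (Suc t)
  have "0 < block_pow A C t l l * A l l" using Suc assms(4) by simp
  also have "\<dots> \<le> (\<Sum>j\<in>C. block_pow A C t l j * A j l)"
    using assms nonneg block_pow_nonneg[of C A] by (intro member_le_sum) auto
  finally show ?case by simp
qed simp

text \<open>A connected block with a self-loop is primitive: route every path through the
  loop, which can absorb any surplus length.\<close>

lemma strongly_connected_block_pow_pos:
  assumes fin: "finite C" and nonneg: "\<And>l k. l \<in> C \<Longrightarrow> k \<in> C \<Longrightarrow> 0 \<le> A l k"
    and "strongly_connected_sub A C"
  shows "\<exists>m>0. \<forall>l\<in>C. \<forall>k\<in>C. 0 < block_pow A C m l k"
proof -
  obtain l0 where l0: "l0 \<in> C" "0 < A l0 l0" and conn: "connected_sub A C"
    using assms(3) unfolding strongly_connected_sub_def by blast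
  have "\<forall>l\<in>C. \<exists>a. 0 < block_pow A C a l l0" "\<forall>k\<in>C. \<exists>b. 0 < block_pow A C b l0 k"
    using conn l0 unfolding connected_sub_def by (auto intro: block_pow_pos_if_path[OF fin nonneg])
  then obtain fa fb where fa: "\<And>l. l \<in> C \<Longrightarrow> 0 < block_pow A C (fa l) l l0"
    and fb: "\<And>k. k \<in> C \<Longrightarrow> 0 < block_pow A C (fb k) l0 k" by metis
  have pos_mult: "0 < block_pow A C (a + b) l k"
    if "0 < block_pow A C a l l0" "0 < block_pow A C b l0 k" "k \<in> C" for a b l k
  proof -
    have "0 < block_pow A C a l l0 * block_pow A C b l0 k" using that by simp
    also have "\<dots> \<le> (\<Sum>j\<in>C. block_pow A C a l j * block_pow A C b j k)"
      using fin l0 that nonneg block_pow_nonneg[of C A] by (intro member_le_sum) auto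
    finally show ?thesis using block_pow_add[OF fin \<open>k \<in> C\<close>] by simp
  qed
  define m where "m = Max (fa ` C) + Max (fb ` C) + 1"
  show ?thesis
  proof (intro exI[of _ m] conjI ballI)
    fix l k assume l: "l \<in> C" and k: "k \<in> C"
    have "fa l \<le> Max (fa ` C)" "fb k \<le> Max (fb ` C)" using fin l k by auto
    then have m: "m = fa l + ((m - fa l - fb k) + fb k)" unfolding m_def by simp
    have "0 < block_pow A C (m - fa l - fb k) l0 l0"
      using block_pow_diag_pos_if_loop[of C A l0] fin nonneg l0 by blast
    from pos_mult[OF this fb[OF k] k]
    have "0 < block_pow A C ((m - fa l - fb k) + fb k) l0 k" .
    from pos_mult[OF fa[OF l] this k] show "0 < block_pow A C m l k" by (subst m)
  qed (simp add: m_def)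
qed

lemma strongly_connected_block_pow_ge:
  assumes fin: "finite C" and nonneg: "\<And>l k. l \<in> C \<Longrightarrow> k \<in> C \<Longrightarrow> 0 \<le> A l k"
    and colsum: "\<And>k. k \<in> C \<Longrightarrow> (\<Sum>l\<in>C. A l k) = 1"
    and conn: "strongly_connected_sub A C" and "a \<in> C"
  shows "\<exists>m>0. \<exists>\<delta>>0. \<delta> \<le> 1 \<and> (\<forall>l\<in>C. \<forall>k\<in>C. \<delta> \<le> block_pow A C m l k)"
proof -
  obtain m where m: "0 < m" "\<forall>l\<in>C. \<forall>k\<in>C. 0 < block_pow A C m l k"
    using strongly_connected_block_pow_pos[OF fin nonneg conn] by blast
  define \<delta> where "\<delta> = Min ((\<lambda>(l, k). block_pow A C m l k) ` (C \<times> C))"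
  have \<delta>_le: "\<delta> \<le> block_pow A C m l k" if "l \<in> C" "k \<in> C" for l k
    unfolding \<delta>_def using fin that by (intro Min_le) auto
  have "\<delta> \<in> (\<lambda>(l, k). block_pow A C m l k) ` (C \<times> C)"
    unfolding \<delta>_def using fin \<open>a \<in> C\<close> by (intro Min_in) auto
  then have "0 < \<delta>" using m(2) by auto
  moreover have "\<delta> \<le> (\<Sum>l\<in>C. block_pow A C m l a)"
    using \<delta>_le[OF \<open>a \<in> C\<close> \<open>a \<in> C\<close>] fin \<open>a \<in> C\<close> block_pow_nonneg[of C A] nonneg
    by (intro order_trans[OF _ member_le_sum]) auto
  ultimately show ?thesis
    using m(1) \<delta>_le colsum_block_pow_eq_1[OF fin colsum \<open>a \<in> C\<close>] by auto
qed

lemma colsum_block_pow_antimono: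
  assumes fin: "finite C" and nonneg: "\<And>l k. l \<in> C \<Longrightarrow> k \<in> C \<Longrightarrow> 0 \<le> A l k"
    and colsum: "\<And>k. k \<in> C \<Longrightarrow> (\<Sum>l\<in>C. A l k) \<le> 1" and "k \<in> C" and "t \<le> t'"
  shows "(\<Sum>l\<in>C. block_pow A C t' l k) \<le> (\<Sum>l\<in>C. block_pow A C t l k)"
proof -
  define cs where "cs t k = (\<Sum>l\<in>C. block_pow A C t l k)" for t k
  have cs_Suc: "cs (Suc t) k = (\<Sum>j\<in>C. cs t j * A j k)" for t k
    unfolding cs_def by (rule colsum_block_pow_Suc)
  have "cs (Suc t) k \<le> cs t k" if "k \<in> C" for t k
    using that
  proof (induction t arbitrary: k)
    case 0
    then show ?case using fin colsum[OF 0] unfolding cs_def colsum_block_pow_1[OF fin] by simp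
  next
    case (Suc t)
    have "cs (Suc (Suc t)) k = (\<Sum>j\<in>C. cs (Suc t) j * A j k)" by (rule cs_Suc)
    also have "\<dots> \<le> (\<Sum>j\<in>C. cs t j * A j k)"
      using Suc.IH nonneg Suc.prems by (intro sum_mono mult_right_mono) auto
    also have "\<dots> = cs (Suc t) k" by (rule cs_Suc[symmetric])
    finally show ?case .
  qed
  then show ?thesis
    using lift_Suc_antimono_le[of "\<lambda>t. cs t k"] assms(4,5) unfolding cs_def by blast
qed

lemma colsum_block_pow_lt_1_if_path:
  assumes fin: "finite C" and nonneg: "\<And>l k. l \<in> C \<Longrightarrow> k \<in> C \<Longrightarrow> 0 \<le> A l k"
    and colsum: "\<And>k. k \<in> C \<Longrightarrow> (\<Sum>l\<in>C. A l k) \<le> 1"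
    and "(k', k) \<in> (edges_in A C)\<^sup>*" and "(\<Sum>l\<in>C. block_pow A C n0 l k') < 1"
  shows "\<exists>n. (\<Sum>l\<in>C. block_pow A C n l k) < 1"
  using assms(4)
proof (induction rule: rtrancl_induct)
  case base
  then show ?case using assms(5) by blast
next
  case (step y z)
  then obtain n where n: "(\<Sum>l\<in>C. block_pow A C n l y) < 1" by blast
  have yz: "y \<in> C" "z \<in> C" "0 < A y z" using step(2) unfolding edges_in_def by auto
  have defect: "0 \<le> (1 - (\<Sum>l\<in>C. block_pow A C n l j)) * A j z" if "j \<in> C" for j
    using colsum_block_pow_le_1[OF fin nonneg colsum that] nonneg[OF that yz(2)] by simp
  have "0 < (1 - (\<Sum>l\<in>C. block_pow A C n l y)) * A y z" using n yz by simp
  also have "\<dots> \<le> (\<Sum>j\<in>C. (1 - (\<Sum>l\<in>C. block_pow A C n l j)) * A j z)"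
    using fin yz defect by (intro member_le_sum) auto
  also have "\<dots> = (\<Sum>j\<in>C. A j z) - (\<Sum>l\<in>C. block_pow A C (Suc n) l z)"
    unfolding colsum_block_pow_Suc by (simp add: sum_subtractf left_diff_distrib)
  finally show ?case using colsum[OF yz(2)] by (intro exI[of _ "Suc n"]) simp
qed

lemma colsum_block_pow_contraction:
  assumes fin: "finite C" and nonneg: "\<And>l k. l \<in> C \<Longrightarrow> k \<in> C \<Longrightarrow> 0 \<le> A l k"
    and colsum: "\<And>k. k \<in> C \<Longrightarrow> (\<Sum>l\<in>C. A l k) \<le> 1"
    and leak: "\<And>k. k \<in> C \<Longrightarrow> \<exists>k'\<in>C. (\<Sum>l\<in>C. A l k') < 1 \<and> (k', k) \<in> (edges_in A C)\<^sup>*"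
  shows "\<exists>m>0. \<exists>\<rho>. 0 \<le> \<rho> \<and> \<rho> < 1 \<and> (\<forall>k\<in>C. (\<Sum>l\<in>C. block_pow A C m l k) \<le> \<rho>)"
proof -
  define cs where "cs t k = (\<Sum>l\<in>C. block_pow A C t l k)" for t k
  have "\<exists>n. cs n k < 1" if k: "k \<in> C" for k
  proof -
    obtain k' where k': "k' \<in> C" "(\<Sum>l\<in>C. A l k') < 1" "(k', k) \<in> (edges_in A C)\<^sup>*"
      using leak[OF k] by blast
    have "cs (Suc 0) k' < 1" using k'(2) unfolding cs_def colsum_block_pow_1[OF fin] .
    then show ?thesis
      using colsum_block_pow_lt_1_if_path[of C A k' k] fin nonneg colsum k'(3) unfolding cs_def by blast
  qed
  then obtain n where n: "\<And>k. k \<in> C \<Longrightarrow> cs (n k) k < 1" by metis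
  define m where "m = Suc (Max (n ` C))"
  have cs_m: "cs m k < 1" if "k \<in> C" for k
  proof -
    have "n k \<le> m" unfolding m_def using fin that by (simp add: le_SucI)
    then have "cs m k \<le> cs (n k) k"
      using colsum_block_pow_antimono[of C A k] fin nonneg colsum that unfolding cs_def by blast
    then show ?thesis using n[OF that] by simp
  qed
  have cs_nonneg: "0 \<le> cs m k" if "k \<in> C" for k
    unfolding cs_def using block_pow_nonneg[of C A] nonneg that by (intro sum_nonneg) auto
  show ?thesis
  proof (cases "C = {}")
    case False
    define \<rho> where "\<rho> = Max (cs m ` C)"
    have "\<rho> \<in> cs m ` C" unfolding \<rho>_def using fin False by (intro Max_in) auto
    then have "0 \<le> \<rho> \<and> \<rho> < 1" using cs_m cs_nonneg by auto
    moreover have "\<forall>k\<in>C. cs m k \<le> \<rho>" unfolding \<rho>_def using fin by auto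
    ultimately show ?thesis unfolding cs_def m_def by blast
  qed auto
qed

lemma block_pow_unroll:
  fixes x e :: "nat \<Rightarrow> nat \<Rightarrow> real"
  assumes fin: "finite C" and nonneg: "\<And>l k. l \<in> C \<Longrightarrow> k \<in> C \<Longrightarrow> 0 \<le> A l k"
    and colsum: "\<And>k. k \<in> C \<Longrightarrow> (\<Sum>l\<in>C. A l k) \<le> 1"
    and rec: "\<And>i k. k \<in> C \<Longrightarrow> x (Suc i) k = (\<Sum>l\<in>C. A l k * x i l) + e (Suc i) k"
    and "k \<in> C"
  shows "\<bar>x (i + m) k - (\<Sum>l\<in>C. block_pow A C m l k * x i l)\<bar> \<le> (\<Sum>s\<in>{1..m}. \<Sum>l\<in>C. \<bar>e (i + s) l\<bar>)"
  using \<open>k \<in> C\<close>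
proof (induction m arbitrary: k)
  case 0
  then show ?case using fin by (simp add: if_distrib[of "\<lambda>y. y * _"] cong: if_cong)
next
  case (Suc m)
  define R where "R = (\<Sum>s\<in>{1..m}. \<Sum>l\<in>C. \<bar>e (i + s) l\<bar>)"
  define \<delta> where "\<delta> j = x (i + m) j - (\<Sum>l\<in>C. block_pow A C m l j * x i l)" for j
  have "(\<Sum>j\<in>C. A j k * (\<Sum>l\<in>C. block_pow A C m l j * x i l))
      = (\<Sum>j\<in>C. \<Sum>l\<in>C. block_pow A C m l j * A j k * x i l)"
    by (simp add: sum_distrib_left mult_ac)
  also have "\<dots> = (\<Sum>l\<in>C. block_pow A C (Suc m) l k * x i l)"
    by (subst sum.swap) (simp add: sum_distrib_right)
  finally have eq: "x (i + Suc m) k - (\<Sum>l\<in>C. block_pow A C (Suc m) l k * x i l)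
      = (\<Sum>j\<in>C. A j k * \<delta> j) + e (i + Suc m) k"
    using rec[OF Suc.prems, of "i + m"] unfolding \<delta>_def
    by (simp add: right_diff_distrib sum_subtractf)
  have "\<bar>\<Sum>j\<in>C. A j k * \<delta> j\<bar> \<le> (\<Sum>j\<in>C. A j k * R)"
    using Suc.IH nonneg Suc.prems unfolding \<delta>_def R_def
    by (intro order_trans[OF sum_abs sum_mono]) (auto simp: abs_mult intro!: mult_left_mono)
  also have "\<dots> \<le> R"
    using colsum[OF Suc.prems] nonneg Suc.prems
    by (simp add: sum_distrib_right[symmetric] R_def mult_left_le_one_le sum_nonneg)
  finally have "\<bar>\<Sum>j\<in>C. A j k * \<delta> j\<bar> \<le> R" .
  moreover have "\<bar>e (i + Suc m) k\<bar> \<le> (\<Sum>l\<in>C. \<bar>e (i + Suc m) l\<bar>)"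
    using fin Suc.prems by (intro member_le_sum) auto
  ultimately show ?case unfolding eq R_def by (simp add: abs_triangle_ineq order_trans)
qed

section \<open>Perturbed consensus recursions\<close>

lemma window_sum_over_n_tendsto_0:
  fixes e :: "nat \<Rightarrow> nat \<Rightarrow> real"
  assumes "finite C" and "\<And>l. l \<in> C \<Longrightarrow> (\<lambda>i. e i l / real i) \<longlonglongrightarrow> 0"
  shows "(\<lambda>i. (\<Sum>s\<in>{1..m}. \<Sum>l\<in>C. \<bar>e (i + s) l\<bar>) / real i) \<longlonglongrightarrow> 0"
proof -
  have "(\<lambda>i. \<Sum>s\<in>{1..m}. \<Sum>l\<in>C. \<bar>e (i + s) l / real i\<bar>) \<longlonglongrightarrow> (\<Sum>s\<in>{1..m}. \<Sum>l\<in>C. 0)"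
    using assms(2) by (intro tendsto_sum tendsto_rabs_zero shift_over_n_tendsto_0)
  then show ?thesis by (simp add: sum_divide_distrib)
qed

lemma stochastic_combination_diff_le:
  fixes P :: "nat \<Rightarrow> nat \<Rightarrow> real" and v :: "nat \<Rightarrow> real"
  assumes fin: "finite C" and P_ge: "\<And>l k. l \<in> C \<Longrightarrow> k \<in> C \<Longrightarrow> \<delta> \<le> P l k" and "0 \<le> \<delta>"
    and P_colsum: "\<And>k. k \<in> C \<Longrightarrow> (\<Sum>l\<in>C. P l k) = 1"
    and v: "\<And>l. l \<in> C \<Longrightarrow> lo \<le> v l \<and> v l \<le> v a" and "a \<in> C" "k1 \<in> C" "k2 \<in> C"
  shows "(\<Sum>l\<in>C. P l k1 * v l) - (\<Sum>l\<in>C. P l k2 * v l) \<le> (1 - \<delta>) * (v a - lo)"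
proof -
  have shift: "(\<Sum>l\<in>C. P l k * v l) = lo + (\<Sum>l\<in>C. P l k * (v l - lo))" if "k \<in> C" for k
    using P_colsum[OF that] by (simp add: algebra_simps sum_subtractf sum_distrib_left[symmetric])
  have "(\<Sum>l\<in>C. P l k1 * (v l - lo)) \<le> (\<Sum>l\<in>C. P l k1 * (v a - lo))"
    using v P_ge \<open>0 \<le> \<delta>\<close> \<open>k1 \<in> C\<close> by (intro sum_mono mult_left_mono) (auto intro: order_trans)
  also have "\<dots> = v a - lo" using P_colsum[OF \<open>k1 \<in> C\<close>] by (simp add: sum_distrib_right[symmetric])
  finally have upper: "(\<Sum>l\<in>C. P l k1 * (v l - lo)) \<le> v a - lo" .
  have "\<delta> * (v a - lo) \<le> P a k2 * (v a - lo)"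
    using P_ge[OF \<open>a \<in> C\<close> \<open>k2 \<in> C\<close>] v[OF \<open>a \<in> C\<close>] by (intro mult_right_mono) auto
  also have "\<dots> \<le> (\<Sum>l\<in>C. P l k2 * (v l - lo))"
    using v P_ge \<open>0 \<le> \<delta>\<close> \<open>k2 \<in> C\<close> fin \<open>a \<in> C\<close>
    by (intro member_le_sum mult_nonneg_nonneg) (auto intro: order_trans)
  finally show ?thesis using upper shift \<open>k1 \<in> C\<close> \<open>k2 \<in> C\<close> by (simp add: algebra_simps)
qed

text \<open>Once \<open>(A\<^sub>C)\<^sup>m\<close> has all entries at least \<open>\<delta> > 0\<close>, the spread \<open>max u - min u\<close> contracts
  by the factor \<open>1 - \<delta>\<close> every \<open>m\<close> steps.\<close>

lemma consensus_disagreement_over_n_tendsto_0: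
  fixes u e :: "nat \<Rightarrow> nat \<Rightarrow> real"
  assumes fin: "finite C" and nonneg: "\<And>l k. l \<in> C \<Longrightarrow> k \<in> C \<Longrightarrow> 0 \<le> A l k"
    and colsum: "\<And>k. k \<in> C \<Longrightarrow> (\<Sum>l\<in>C. A l k) = 1"
    and conn: "strongly_connected_sub A C"
    and rec: "\<And>i k. k \<in> C \<Longrightarrow> u (Suc i) k = (\<Sum>l\<in>C. A l k * u i l) + e (Suc i) k"
    and e: "\<And>l. l \<in> C \<Longrightarrow> (\<lambda>i. e i l / real i) \<longlonglongrightarrow> 0"
    and a: "a \<in> C" and b: "b \<in> C"
  shows "(\<lambda>i. (u i a - u i b) / real i) \<longlonglongrightarrow> 0"
proof -
  obtain m \<delta> where m: "0 < m" and \<delta>: "0 < \<delta>" "\<delta> \<le> 1"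
    and \<delta>_le: "\<And>l k. l \<in> C \<Longrightarrow> k \<in> C \<Longrightarrow> \<delta> \<le> block_pow A C m l k"
    using strongly_connected_block_pow_ge[OF fin nonneg colsum conn a] by blast
  have P_colsum: "(\<Sum>l\<in>C. block_pow A C m l k) = 1" if "k \<in> C" for k
    by (rule colsum_block_pow_eq_1[OF fin colsum that])
  define R where "R i = (\<Sum>s\<in>{1..m}. \<Sum>l\<in>C. \<bar>e (i + s) l\<bar>)" for i
  have unroll: "\<bar>u (i + m) k - (\<Sum>l\<in>C. block_pow A C m l k * u i l)\<bar> \<le> R i" if "k \<in> C" for i k
    unfolding R_def using colsum by (intro block_pow_unroll[where A=A and C=C and x=u and e=e, OF fin nonneg _ rec that]) simp_all
  define sp where "sp i = Max ((\<lambda>(a, b). u i a - u i b) ` (C \<times> C))" for i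
  have sp_ge: "u i a' - u i b' \<le> sp i" if "a' \<in> C" "b' \<in> C" for i a' b'
    unfolding sp_def using fin that by (intro Max_ge) auto
  have sp_attained: "\<exists>a'\<in>C. \<exists>b'\<in>C. sp i = u i a' - u i b'" for i
  proof -
    have "sp i \<in> (\<lambda>(a, b). u i a - u i b) ` (C \<times> C)" unfolding sp_def using fin a by (intro Max_in) auto
    then show ?thesis by auto
  qed
  have sp_step: "sp (i + m) \<le> (1 - \<delta>) * sp i + 2 * R i" for i
  proof -
    obtain a' b' where a'b': "a' \<in> C" "b' \<in> C" "sp i = u i a' - u i b'" using sp_attained by blast
    obtain k1 k2 where k: "k1 \<in> C" "k2 \<in> C" "sp (i + m) = u (i + m) k1 - u (i + m) k2"
      using sp_attained by blast
    have "u i b' \<le> u i l \<and> u i l \<le> u i a'" if "l \<in> C" for l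
      using sp_ge[OF that a'b'(2), of i] sp_ge[OF a'b'(1) that, of i] a'b'(3) by simp
    then have "(\<Sum>l\<in>C. block_pow A C m l k1 * u i l) - (\<Sum>l\<in>C. block_pow A C m l k2 * u i l)
        \<le> (1 - \<delta>) * sp i"
      unfolding a'b'(3) using \<delta>_le \<delta> P_colsum a'b' k
      by (intro stochastic_combination_diff_le[OF fin]) auto
    then show ?thesis using unroll[OF k(1), of i] unroll[OF k(2), of i] k(3) by linarith
  qed
  have sp_lim: "(\<lambda>i. sp i / real i) \<longlonglongrightarrow> 0"
  proof (rule contraction_over_n_tendsto_0[where r="\<lambda>i. 2 * R i", OF m _ _ _ sp_step])
    have "(\<lambda>i. 2 * (R i / real i)) \<longlonglongrightarrow> 2 * 0"
      unfolding R_def by (intro tendsto_mult tendsto_const window_sum_over_n_tendsto_0[OF fin e])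
    then show "(\<lambda>i. 2 * R i / real i) \<longlonglongrightarrow> 0" by simp
    show "0 \<le> sp i" for i using sp_ge[OF a a, of i] by simp
  qed (use \<delta> in auto)
  have "norm ((u i a - u i b) / real i) \<le> sp i / real i" for i
    using sp_ge[OF a b, of i] sp_ge[OF b a, of i] by (auto simp: abs_divide intro!: divide_right_mono)
  then show ?thesis by (intro Lim_null_comparison[OF always_eventually sp_lim]) simp
qed

lemma perron_average_over_n_tendsto:
  fixes u c :: "nat \<Rightarrow> nat \<Rightarrow> real"
  assumes fin: "finite C" and perron: "perron_vec A C p"
    and rec: "\<And>i k. k \<in> C \<Longrightarrow> u (Suc i) k = (\<Sum>l\<in>C. A l k * (u i l + c (Suc i) l))"
    and ces: "\<And>l. l \<in> C \<Longrightarrow> (\<lambda>n. (\<Sum>j<n. c (Suc j) l) / real n) \<longlonglongrightarrow> m l"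
  shows "(\<lambda>i. (\<Sum>l\<in>C. p l * u i l) / real i) \<longlonglongrightarrow> (\<Sum>l\<in>C. p l * m l)"
proof -
  define w where "w i = (\<Sum>l\<in>C. p l * u i l)" for i
  have fixpoint: "(\<Sum>k\<in>C. A l k * p k) = p l" if "l \<in> C" for l
    using perron that unfolding perron_vec_def by blast
  have w_Suc: "w (Suc i) = w i + (\<Sum>l\<in>C. p l * c (Suc i) l)" for i
  proof -
    have "w (Suc i) = (\<Sum>k\<in>C. \<Sum>l\<in>C. p k * A l k * (u i l + c (Suc i) l))"
      unfolding w_def by (intro sum.cong) (auto simp: rec sum_distrib_left mult.assoc)
    also have "\<dots> = (\<Sum>l\<in>C. (\<Sum>k\<in>C. A l k * p k) * (u i l + c (Suc i) l))"
      by (subst sum.swap) (simp add: sum_distrib_left sum_distrib_right mult_ac)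
    also have "\<dots> = w i + (\<Sum>l\<in>C. p l * c (Suc i) l)"
      unfolding w_def by (simp add: fixpoint distrib_left sum.distrib)
    finally show ?thesis .
  qed
  have w_eq: "w n = w 0 + (\<Sum>l\<in>C. p l * (\<Sum>j<n. c (Suc j) l))" for n
    by (induction n) (simp_all add: w_Suc distrib_left sum.distrib)
  have "w n / real n = w 0 / real n + (\<Sum>l\<in>C. p l * ((\<Sum>j<n. c (Suc j) l) / real n))" for n
    by (subst w_eq) (simp add: add_divide_distrib sum_divide_distrib times_divide_eq_right[symmetric]
                          del: times_divide_eq_right)
  moreover have "(\<lambda>n. w 0 / real n + (\<Sum>l\<in>C. p l * ((\<Sum>j<n. c (Suc j) l) / real n)))
      \<longlonglongrightarrow> 0 + (\<Sum>l\<in>C. p l * m l)"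
    using ces by (intro tendsto_add lim_const_over_n tendsto_sum tendsto_mult tendsto_const) auto
  ultimately show ?thesis unfolding w_def by simp
qed

text \<open>The Perron weighting turns \<open>\<Sum>\<^sub>l p\<^sub>l u\<^sub>l\<close> into a plain sum of the inputs, and the
  disagreement around this average is sublinear.\<close>

lemma strongly_connected_recursion_limit:
  fixes u c :: "nat \<Rightarrow> nat \<Rightarrow> real"
  assumes fin: "finite C" and nonneg: "\<And>l k. l \<in> C \<Longrightarrow> k \<in> C \<Longrightarrow> 0 \<le> A l k"
    and colsum: "\<And>k. k \<in> C \<Longrightarrow> (\<Sum>l\<in>C. A l k) = 1"
    and conn: "strongly_connected_sub A C" and perron: "perron_vec A C p"
    and rec: "\<And>i k. k \<in> C \<Longrightarrow> u (Suc i) k = (\<Sum>l\<in>C. A l k * (u i l + c (Suc i) l))"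
    and ces: "\<And>l. l \<in> C \<Longrightarrow> (\<lambda>n. (\<Sum>j<n. c (Suc j) l) / real n) \<longlonglongrightarrow> m l"
    and k: "k \<in> C"
  shows "(\<lambda>i. u i k / real i) \<longlonglongrightarrow> (\<Sum>l\<in>C. p l * m l)"
proof -
  define e where "e i k = (\<Sum>l\<in>C. A l k * c i l)" for i k
  have rec': "u (Suc i) k = (\<Sum>l\<in>C. A l k * u i l) + e (Suc i) k" if "k \<in> C" for i k
    unfolding rec[OF that] e_def by (simp add: distrib_left sum.distrib)
  have "(\<lambda>i. e i l / real i) \<longlonglongrightarrow> 0" if "l \<in> C" for l
  proof -
    have "(\<lambda>i. \<Sum>l'\<in>C. A l' l * (c i l' / real i)) \<longlonglongrightarrow> (\<Sum>l'\<in>C. A l' l * 0)"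
      using ces by (intro tendsto_sum tendsto_mult tendsto_const over_n_tendsto_0_if_cesaro_mean_tendsto)
    then show ?thesis unfolding e_def by (simp add: sum_divide_distrib)
  qed
  then have disagreement: "(\<lambda>i. (u i k - u i l) / real i) \<longlonglongrightarrow> 0" if "l \<in> C" for l
    using consensus_disagreement_over_n_tendsto_0[where A=A and u=u and e=e, OF fin nonneg colsum conn rec'] k that by blast
  have "sum p C = 1" using perron unfolding perron_vec_def by blast
  then have split: "u i k = (\<Sum>l\<in>C. p l * u i l) + (\<Sum>l\<in>C. p l * (u i k - u i l))" for i
    by (simp add: right_diff_distrib sum_subtractf sum_distrib_right[symmetric])
  have "u i k / real i = (\<Sum>l\<in>C. p l * u i l) / real i + (\<Sum>l\<in>C. p l * ((u i k - u i l) / real i))" for i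
    by (subst split) (simp add: add_divide_distrib sum_divide_distrib)
  moreover have "(\<lambda>i. (\<Sum>l\<in>C. p l * u i l) / real i + (\<Sum>l\<in>C. p l * ((u i k - u i l) / real i)))
      \<longlonglongrightarrow> (\<Sum>l\<in>C. p l * m l) + (\<Sum>l\<in>C. p l * 0)"
    using disagreement
    by (intro tendsto_add perron_average_over_n_tendsto[OF fin perron rec ces] tendsto_sum tendsto_mult tendsto_const) auto
  ultimately show ?thesis by simp
qed

lemma leaking_recursion_over_n_tendsto_0:
  fixes x e :: "nat \<Rightarrow> nat \<Rightarrow> real"
  assumes fin: "finite C" and nonneg: "\<And>l k. l \<in> C \<Longrightarrow> k \<in> C \<Longrightarrow> 0 \<le> A l k"
    and colsum: "\<And>k. k \<in> C \<Longrightarrow> (\<Sum>l\<in>C. A l k) \<le> 1"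
    and leak: "\<And>k. k \<in> C \<Longrightarrow> \<exists>k'\<in>C. (\<Sum>l\<in>C. A l k') < 1 \<and> (k', k) \<in> (edges_in A C)\<^sup>*"
    and rec: "\<And>i k. k \<in> C \<Longrightarrow> x (Suc i) k = (\<Sum>l\<in>C. A l k * x i l) + e (Suc i) k"
    and e: "\<And>l. l \<in> C \<Longrightarrow> (\<lambda>i. e i l / real i) \<longlonglongrightarrow> 0"
    and k: "k \<in> C"
  shows "(\<lambda>i. x i k / real i) \<longlonglongrightarrow> 0"
proof -
  obtain m \<rho> where m: "0 < m" and \<rho>: "0 \<le> \<rho>" "\<rho> < 1"
    and contr: "\<forall>k\<in>C. (\<Sum>l\<in>C. block_pow A C m l k) \<le> \<rho>"
    using colsum_block_pow_contraction[OF fin nonneg colsum leak] by blast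
  define R where "R i = (\<Sum>s\<in>{1..m}. \<Sum>l\<in>C. \<bar>e (i + s) l\<bar>)" for i
  define nm where "nm i = Max ((\<lambda>l. \<bar>x i l\<bar>) ` C)" for i
  have nm_ge: "\<bar>x i l\<bar> \<le> nm i" if "l \<in> C" for i l unfolding nm_def using fin that by (intro Max_ge) auto
  have nm_step: "nm (i + m) \<le> \<rho> * nm i + R i" for i
  proof -
    have "\<bar>x (i + m) k'\<bar> \<le> \<rho> * nm i + R i" if k': "k' \<in> C" for k'
    proof -
      have "\<bar>\<Sum>l\<in>C. block_pow A C m l k' * x i l\<bar> \<le> (\<Sum>l\<in>C. block_pow A C m l k') * nm i"
        using block_pow_nonneg[of C A] nonneg k' nm_ge
        by (auto simp: abs_mult sum_distrib_right intro!: order_trans[OF sum_abs sum_mono] mult_left_mono)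
      also have "\<dots> \<le> \<rho> * nm i" using contr k' nm_ge[OF k, of i] by (intro mult_right_mono) auto
      finally show ?thesis
        using block_pow_unroll[where A=A and C=C and x=x and e=e, OF fin nonneg colsum rec k', of i m]
        unfolding R_def by linarith
    qed
    moreover have "nm (i + m) \<in> (\<lambda>l. \<bar>x (i + m) l\<bar>) ` C" unfolding nm_def using fin k by (intro Max_in) auto
    ultimately show ?thesis by auto
  qed
  have "(\<lambda>i. R i / real i) \<longlonglongrightarrow> 0" unfolding R_def by (rule window_sum_over_n_tendsto_0[OF fin e])
  then have nm_lim: "(\<lambda>i. nm i / real i) \<longlonglongrightarrow> 0"
    using nm_ge[OF k] by (intro contraction_over_n_tendsto_0[where r=R, OF m \<rho> _ nm_step]) (meson abs_ge_zero order_trans)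
  have "norm (x i k / real i) \<le> nm i / real i" for i
    using nm_ge[OF k, of i] by (simp add: abs_divide divide_right_mono)
  then show ?thesis by (intro Lim_null_comparison[OF always_eventually nm_lim]) simp
qed

text \<open>The deviation \<open>u i - i z\<close> from the fixed point of \<open>z = A\<^sub>C\<^sup>T z + D\<close> obeys a recursion
  with sublinear inputs.\<close>

lemma leaking_recursion_limit:
  fixes u d :: "nat \<Rightarrow> nat \<Rightarrow> real" and z D :: "nat \<Rightarrow> real"
  assumes fin: "finite C" and nonneg: "\<And>l k. l \<in> C \<Longrightarrow> k \<in> C \<Longrightarrow> 0 \<le> A l k"
    and colsum: "\<And>k. k \<in> C \<Longrightarrow> (\<Sum>l\<in>C. A l k) \<le> 1"
    and leak: "\<And>k. k \<in> C \<Longrightarrow> \<exists>k'\<in>C. (\<Sum>l\<in>C. A l k') < 1 \<and> (k', k) \<in> (edges_in A C)\<^sup>*"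
    and rec: "\<And>i k. k \<in> C \<Longrightarrow> u (Suc i) k = (\<Sum>l\<in>C. A l k * u i l) + d (Suc i) k"
    and d: "\<And>k. k \<in> C \<Longrightarrow> (\<lambda>i. d (Suc i) k / real (Suc i)) \<longlonglongrightarrow> D k"
    and z: "\<And>k. k \<in> C \<Longrightarrow> z k = (\<Sum>l\<in>C. A l k * z l) + D k"
    and k: "k \<in> C"
  shows "(\<lambda>i. u i k / real i) \<longlonglongrightarrow> z k"
proof -
  define x where "x i k = u i k - real i * z k" for i k
  define e where "e n k = d n k - real (n - 1) * D k - z k" for n k
  have "x (Suc i) k = (\<Sum>l\<in>C. A l k * x i l) + e (Suc i) k" if "k \<in> C" for i k
  proof -
    have "(\<Sum>l\<in>C. A l k * x i l) = (\<Sum>l\<in>C. A l k * u i l) - real i * (z k - D k)"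
      using z[OF that] unfolding x_def
      by (simp add: right_diff_distrib sum_subtractf sum_distrib_left algebra_simps)
    then show ?thesis unfolding x_def e_def rec[OF that] by (simp add: algebra_simps)
  qed
  moreover have "(\<lambda>n. e n l / real n) \<longlonglongrightarrow> 0" if "l \<in> C" for l
  proof -
    have "(\<lambda>i. d (Suc i) l / real (Suc i) - real i / real (Suc i) * D l - z l * inverse (real (Suc i)))
          \<longlonglongrightarrow> D l - 1 * D l - z l * 0"
      by (intro tendsto_diff tendsto_mult d[OF that] LIMSEQ_n_over_Suc_n tendsto_const
                LIMSEQ_inverse_real_of_nat)
    then have "(\<lambda>i. e (Suc i) l / real (Suc i)) \<longlonglongrightarrow> 0"
      unfolding e_def by (simp add: divide_inverse algebra_simps)
    then show ?thesis by (rule LIMSEQ_imp_Suc)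
  qed
  ultimately have "(\<lambda>i. x i k / real i) \<longlonglongrightarrow> 0"
    by (intro leaking_recursion_over_n_tendsto_0[where A=A and x=x and e=e, OF fin nonneg colsum leak _ _ k])
  then have "(\<lambda>i. x i k / real i + z k) \<longlonglongrightarrow> 0 + z k" by (intro tendsto_add tendsto_const)
  moreover have "eventually (\<lambda>i. x i k / real i + z k = u i k / real i) sequentially"
    using eventually_gt_at_top[of 0] by eventually_elim (simp add: x_def field_simps)
  ultimately show ?thesis by (simp add: tendsto_cong)
qed

section \<open>Weak graphs\<close>

lemma weak_graph_nonneg: "weak_graph N A cmp S R \<Longrightarrow> l < N \<Longrightarrow> k < N \<Longrightarrow> 0 \<le> A l k"
  unfolding weak_graph_def by auto

lemma weak_graph_colsum: "weak_graph N A cmp S R \<Longrightarrow> k < N \<Longrightarrow> (\<Sum>l<N. A l k) = 1"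
  unfolding weak_graph_def by auto

lemma weak_graph_cmp_less: "weak_graph N A cmp S R \<Longrightarrow> k < N \<Longrightarrow> cmp k < S + R"
  unfolding weak_graph_def by blast

lemma weak_graph_sending_strongly_connected:
  "weak_graph N A cmp S R \<Longrightarrow> s < S \<Longrightarrow> strongly_connected_sub A (subnet cmp N s)"
  unfolding weak_graph_def by blast

lemma weak_graph_receiving_connected:
  "weak_graph N A cmp S R \<Longrightarrow> r < R \<Longrightarrow> connected_sub A (subnet cmp N (S + r))"
  unfolding weak_graph_def by blast

lemma weak_graph_link:
  "weak_graph N A cmp S R \<Longrightarrow> r < R \<Longrightarrow> s < S \<Longrightarrow>
     \<exists>l\<in>subnet cmp N s. \<exists>k\<in>subnet cmp N (S + r). 0 < A l k"
  unfolding weak_graph_def by blast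

lemma finite_subnet: "finite (subnet cmp N s)"
  unfolding subnet_def by simp

lemma finite_sending: "finite (sending cmp N S)" and finite_receiving: "finite (receiving cmp N S)"
  unfolding sending_def receiving_def by simp_all

lemma sum_sending_receiving:
  "(\<Sum>l<N. f l) = (\<Sum>l\<in>sending cmp N S. f l) + (\<Sum>l\<in>receiving cmp N S. f l)"
proof -
  have "{..<N} = sending cmp N S \<union> receiving cmp N S" "sending cmp N S \<inter> receiving cmp N S = {}"
    unfolding sending_def receiving_def by auto
  then show ?thesis by (simp add: sum.union_disjoint[OF finite_sending finite_receiving])
qed

lemma weak_graph_receiving_colsum_le:
  assumes graph: "weak_graph N A cmp S R" and k: "k \<in> receiving cmp N S"
  shows "(\<Sum>l\<in>receiving cmp N S. A l k) \<le> 1"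
proof -
  have "0 \<le> (\<Sum>l\<in>sending cmp N S. A l k)"
    using k weak_graph_nonneg[OF graph] by (intro sum_nonneg) (auto simp: sending_def receiving_def)
  moreover have "k < N" using k unfolding receiving_def by simp
  ultimately show ?thesis
    using weak_graph_colsum[OF graph] sum_sending_receiving[where f="\<lambda>l. A l k" and cmp=cmp and S=S]
    by fastforce
qed

lemma weak_graph_sending_inflow:
  assumes "weak_graph N A cmp S R" "s < S" "k \<in> subnet cmp N s"
  shows "(\<Sum>l<N. A l k * f l) = (\<Sum>l\<in>subnet cmp N s. A l k * f l)"
proof (rule sum.mono_neutral_right)
  show "\<forall>l\<in>{..<N} - subnet cmp N s. A l k * f l = 0"
    using assms unfolding weak_graph_def subnet_def by (metis (mono_tags, lifting) DiffE lessThan_iff mem_Collect_eq not_le mult_zero_left)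
qed (auto simp: subnet_def)

lemma weak_graph_sending_colsum:
  "weak_graph N A cmp S R \<Longrightarrow> s < S \<Longrightarrow> k \<in> subnet cmp N s \<Longrightarrow> (\<Sum>l\<in>subnet cmp N s. A l k) = 1"
  using weak_graph_sending_inflow[of N A cmp S R s k "\<lambda>_. 1"] weak_graph_colsum[of N A cmp S R k]
  by (simp add: subnet_def)

text \<open>Without sending agents, \<open>A\<^sub>\<R>\<close> would be column-stochastic and \<open>I - A\<^sub>\<R>\<close> singular.\<close>

lemma sending_nonempty_if_inverse_I_minus:
  assumes graph: "weak_graph N A cmp S R" and inv: "inverse_I_minus A (receiving cmp N S) B"
    and k: "k \<in> receiving cmp N S"
  shows "0 < S"
proof (rule ccontr)
  define Rs where "Rs = receiving cmp N S"
  assume "\<not> 0 < S"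
  then have Rs: "Rs = {..<N}" unfolding Rs_def receiving_def by auto
  have "1 = (\<Sum>i\<in>Rs. if i = k then 1 else 0 :: real)" using k Rs unfolding Rs_def by simp
  also have "\<dots> = (\<Sum>i\<in>Rs. \<Sum>j\<in>Rs. ((if i = j then 1 else 0) - A i j) * B j k)"
    using inv k unfolding inverse_I_minus_def Rs_def by (intro sum.cong) auto
  also have "\<dots> = (\<Sum>j\<in>Rs. (1 - (\<Sum>i\<in>Rs. A i j)) * B j k)"
    by (subst sum.swap) (simp add: sum_distrib_right[symmetric] sum_subtractf Rs)
  also have "\<dots> = 0" using weak_graph_colsum[OF graph] Rs by simp
  finally show False by simp
qed

text \<open>The links coming from the sending part make the corresponding columns of \<open>A\<^sub>\<R>\<close> leak.\<close>

lemma weak_graph_receiving_leak: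
  assumes graph: "weak_graph N A cmp S R" and "0 < S" and k: "k \<in> receiving cmp N S"
  defines "Rs \<equiv> receiving cmp N S"
  shows "\<exists>k'\<in>Rs. (\<Sum>l\<in>Rs. A l k') < 1 \<and> (k', k) \<in> (edges_in A Rs)\<^sup>*"
proof -
  have kN: "k < N" "S \<le> cmp k" using k unfolding receiving_def by auto
  with weak_graph_cmp_less[OF graph kN(1)] obtain r where r: "r < R" "cmp k = S + r" "k < N"
    by (intro that[of "cmp k - S"]) auto
  obtain l k' where lk': "l \<in> subnet cmp N 0" "k' \<in> subnet cmp N (S + r)" "0 < A l k'"
    using weak_graph_link[OF graph r(1) \<open>0 < S\<close>] by blast
  have l: "l \<in> sending cmp N S" and k': "k' \<in> Rs" "k' < N"
    using lk' \<open>0 < S\<close> unfolding subnet_def sending_def Rs_def receiving_def by auto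
  have "A l k' \<le> (\<Sum>l'\<in>sending cmp N S. A l' k')"
    using l k' graph finite_sending by (intro member_le_sum) (auto simp: sending_def weak_graph_nonneg)
  moreover have "(\<Sum>l'\<in>sending cmp N S. A l' k') + (\<Sum>l'\<in>Rs. A l' k') = 1"
    using weak_graph_colsum[OF graph k'(2)] unfolding Rs_def sum_sending_receiving[where cmp=cmp and S=S] .
  ultimately have "(\<Sum>l'\<in>Rs. A l' k') < 1" using lk'(3) by linarith
  moreover have "(k', k) \<in> (edges_in A (subnet cmp N (S + r)))\<^sup>*"
  proof -
    have "k \<in> subnet cmp N (S + r)" using r unfolding subnet_def by simp
    then show ?thesis
      using weak_graph_receiving_connected[OF graph r(1)] lk'(2) unfolding connected_sub_def by blast
  qed
  moreover have "edges_in A (subnet cmp N (S + r)) \<subseteq> edges_in A Rs"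
    unfolding edges_in_def subnet_def Rs_def receiving_def by auto
  ultimately show ?thesis using k'(1) rtrancl_mono[of "edges_in A (subnet cmp N (S + r))"] by auto
qed

lemma sum_delta_mult: "finite C \<Longrightarrow> k \<in> C \<Longrightarrow> (\<Sum>l\<in>C. f l * (if l = k then 1 else 0)) = (f k :: real)"
  by (simp add: if_distrib[of "\<lambda>x. _ * x"] cong: if_cong)

lemma inverse_I_minus_fixpoint:
  assumes inv: "inverse_I_minus A Rs B" and fin: "finite Rs" and k: "k \<in> Rs"
  shows "(\<Sum>j\<in>Rs. B j k * D j) = (\<Sum>l\<in>Rs. A l k * (\<Sum>j\<in>Rs. B j l * D j)) + D k"
proof -
  have "(\<Sum>l\<in>Rs. B j l * A l k) = B j k - (if j = k then 1 else 0)" if "j \<in> Rs" for j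
  proof -
    have "(\<Sum>l\<in>Rs. B j l * ((if l = k then 1 else 0) - A l k)) = (if j = k then 1 else 0)"
      using inv that k unfolding inverse_I_minus_def by blast
    then show ?thesis using sum_delta_mult[OF fin k, of "B j"] by (simp add: right_diff_distrib sum_subtractf)
  qed
  note BA = this
  have "(\<Sum>l\<in>Rs. A l k * (\<Sum>j\<in>Rs. B j l * D j)) = (\<Sum>l\<in>Rs. \<Sum>j\<in>Rs. B j l * A l k * D j)"
    by (simp add: sum_distrib_left mult_ac)
  also have "\<dots> = (\<Sum>j\<in>Rs. (\<Sum>l\<in>Rs. B j l * A l k) * D j)"
    by (subst sum.swap) (simp add: sum_distrib_right)
  also have "\<dots> = (\<Sum>j\<in>Rs. (B j k - (if j = k then 1 else 0)) * D j)"
    using BA by simp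
  also have "\<dots> = (\<Sum>j\<in>Rs. B j k * D j) - D k"
    using sum_delta_mult[OF fin k, of D] by (simp add: right_diff_distrib sum_subtractf mult.commute)
  finally show ?thesis by simp
qed

lemma sending_agent_limit:
  fixes u c :: "nat \<Rightarrow> nat \<Rightarrow> real" and m :: "nat \<Rightarrow> real"
  assumes graph: "weak_graph N A cmp S R" and perron: "\<forall>s<S. perron_vec A (subnet cmp N s) p"
    and rec: "\<And>i k. k < N \<Longrightarrow> u (Suc i) k = (\<Sum>l<N. A l k * (u i l + c (Suc i) l))"
    and ces: "\<And>l. l < N \<Longrightarrow> (\<lambda>n. (\<Sum>j<n. c (Suc j) l) / real n) \<longlonglongrightarrow> m l"
    and l: "l \<in> sending cmp N S"
  shows "(\<lambda>i. u i l / real i) \<longlonglongrightarrow> (\<Sum>l'\<in>subnet cmp N (cmp l). p l' * m l')"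
proof -
  define s where "s = cmp l"
  have s: "s < S" "l \<in> subnet cmp N s" using l unfolding s_def sending_def subnet_def by auto
  have sub: "k < N" if "k \<in> subnet cmp N s" for k using that unfolding subnet_def by simp
  show ?thesis unfolding s_def[symmetric]
  proof (rule strongly_connected_recursion_limit[OF finite_subnet _ _ _ _ _ _ s(2)])
    show "u (Suc i) k = (\<Sum>l\<in>subnet cmp N s. A l k * (u i l + c (Suc i) l))"
      if "k \<in> subnet cmp N s" for i k
      using rec[OF sub[OF that]] weak_graph_sending_inflow[OF graph s(1) that] by simp
  qed (use graph s(1) perron sub ces in \<open>auto intro: weak_graph_nonneg weak_graph_sending_colsum
                                           weak_graph_sending_strongly_connected\<close>)
qed

lemma omega_weighted_sum:
  "(\<Sum>l\<in>sending cmp N S. omega N A cmp S p B l k * m l)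
     = (\<Sum>j\<in>receiving cmp N S. B j k *
          (\<Sum>l\<in>sending cmp N S. A l j * (\<Sum>l'\<in>subnet cmp N (cmp l). p l' * m l')))"
proof -
  define Ss where "Ss = sending cmp N S"
  define Mv where "Mv l = (\<Sum>l'\<in>subnet cmp N (cmp l). p l' * m l')" for l
  have block_average: "(\<Sum>l\<in>Ss. Emat cmp p l l' * m l) = Mv l'" if "l' \<in> Ss" for l'
  proof -
    have "subnet cmp N (cmp l') = {l \<in> Ss. cmp l = cmp l'}"
      using that unfolding Ss_def subnet_def sending_def by auto
    moreover have "(\<Sum>l\<in>Ss. Emat cmp p l l' * m l) = (\<Sum>l\<in>Ss. if cmp l = cmp l' then p l * m l else 0)"
      unfolding Emat_def by (intro sum.cong) auto
    ultimately show ?thesis using finite_sending[of cmp N S] by (simp add: Ss_def Mv_def sum.inter_filter)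
  qed
  have "(\<Sum>l\<in>Ss. omega N A cmp S p B l k * m l)
      = (\<Sum>l'\<in>Ss. \<Sum>l\<in>Ss. Emat cmp p l l' * m l * (\<Sum>j\<in>receiving cmp N S. A l' j * B j k))"
    unfolding omega_def Ss_def[symmetric]
    by (subst sum.swap) (simp add: sum_distrib_left sum_distrib_right mult_ac)
  also have "\<dots> = (\<Sum>l'\<in>Ss. Mv l' * (\<Sum>j\<in>receiving cmp N S. A l' j * B j k))"
    using block_average by (intro sum.cong refl) (simp add: sum_distrib_right[symmetric])
  also have "\<dots> = (\<Sum>l'\<in>Ss. \<Sum>j\<in>receiving cmp N S. B j k * (A l' j * Mv l'))"
    by (simp add: sum_distrib_left mult_ac)
  also have "\<dots> = (\<Sum>j\<in>receiving cmp N S. B j k * (\<Sum>l\<in>Ss. A l j * Mv l))"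
    by (subst sum.swap) (simp add: sum_distrib_left)
  finally show ?thesis unfolding Ss_def Mv_def .
qed

text \<open>Sending sub-networks are closed, so their agents reach Perron-weighted rates; these
  rates drive the receiving part, whose rate is the fixed point of \<open>z = A\<^sub>\<R>\<^sup>T z + D\<close>.\<close>

lemma network_limit:
  fixes u c :: "nat \<Rightarrow> nat \<Rightarrow> real" and m :: "nat \<Rightarrow> real"
  assumes graph: "weak_graph N A cmp S R"
    and perron: "\<forall>s<S. perron_vec A (subnet cmp N s) p"
    and inv: "inverse_I_minus A (receiving cmp N S) B"
    and rec: "\<And>i k. k < N \<Longrightarrow> u (Suc i) k = (\<Sum>l<N. A l k * (u i l + c (Suc i) l))"
    and ces: "\<And>l. l < N \<Longrightarrow> (\<lambda>n. (\<Sum>j<n. c (Suc j) l) / real n) \<longlonglongrightarrow> m l"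
    and k: "k \<in> receiving cmp N S"
  shows "(\<lambda>i. u i k / real i) \<longlonglongrightarrow> (\<Sum>l\<in>sending cmp N S. omega N A cmp S p B l k * m l)"
proof -
  define Ss where "Ss = sending cmp N S"
  define Rs where "Rs = receiving cmp N S"
  define Mv where "Mv l = (\<Sum>l'\<in>subnet cmp N (cmp l). p l' * m l')" for l
  define D where "D k' = (\<Sum>l\<in>Ss. A l k' * Mv l)" for k'
  define d where "d n k' = (\<Sum>l\<in>Rs. A l k' * c n l) + (\<Sum>l\<in>Ss. A l k' * (u (n - 1) l + c n l))" for n k'
  have Ss_N: "l < N" if "l \<in> Ss" for l using that unfolding Ss_def sending_def by simp
  have Rs_N: "l < N" if "l \<in> Rs" for l using that unfolding Rs_def receiving_def by simp
  have rec_R: "u (Suc i) k' = (\<Sum>l\<in>Rs. A l k' * u i l) + d (Suc i) k'" if "k' \<in> Rs" for i k'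
    using rec[OF Rs_N[OF that], of i] unfolding d_def Ss_def Rs_def
    by (simp add: sum_sending_receiving[where cmp=cmp and S=S] distrib_left sum.distrib add_ac)
  have d_lim: "(\<lambda>i. d (Suc i) k' / real (Suc i)) \<longlonglongrightarrow> D k'" if "k' \<in> Rs" for k'
  proof -
    have c_lim: "(\<lambda>i. c (Suc i) l / real (Suc i)) \<longlonglongrightarrow> 0" if "l < N" for l
      using LIMSEQ_Suc[OF over_n_tendsto_0_if_cesaro_mean_tendsto[OF ces[OF that]]] .
    have u_lim: "(\<lambda>i. u i l / real (Suc i)) \<longlonglongrightarrow> Mv l" if "l \<in> Ss" for l
      using that unfolding Mv_def Ss_def by (intro over_Suc_tendsto sending_agent_limit[OF graph perron rec ces])
    have "(\<lambda>i. (\<Sum>l\<in>Rs. A l k' * (c (Suc i) l / real (Suc i)))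
             + (\<Sum>l\<in>Ss. A l k' * (u i l / real (Suc i) + c (Suc i) l / real (Suc i))))
          \<longlonglongrightarrow> (\<Sum>l\<in>Rs. A l k' * 0) + (\<Sum>l\<in>Ss. A l k' * (Mv l + 0))"
      using Rs_N Ss_N by (intro tendsto_add tendsto_sum tendsto_mult tendsto_const c_lim u_lim) auto
    then show ?thesis
      unfolding d_def D_def by (simp add: add_divide_distrib sum_divide_distrib distrib_left)
  qed
  have "(\<lambda>i. u i k / real i) \<longlonglongrightarrow> (\<Sum>j\<in>Rs. B j k * D j)"
  proof (rule leaking_recursion_limit[where z="\<lambda>k'. \<Sum>j\<in>Rs. B j k' * D j",
                                      OF _ _ _ _ rec_R d_lim _ k[folded Rs_def]])
    show "finite Rs" unfolding Rs_def by (rule finite_receiving)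
    show "0 \<le> A l k'" if "l \<in> Rs" "k' \<in> Rs" for l k'
      using that Rs_N weak_graph_nonneg[OF graph] by blast
    show "(\<Sum>l\<in>Rs. A l k') \<le> 1" if "k' \<in> Rs" for k'
      using weak_graph_receiving_colsum_le[OF graph] that unfolding Rs_def .
    show "\<exists>k''\<in>Rs. (\<Sum>l\<in>Rs. A l k'') < 1 \<and> (k'', k') \<in> (edges_in A Rs)\<^sup>*" if "k' \<in> Rs" for k'
      using weak_graph_receiving_leak[OF graph sending_nonempty_if_inverse_I_minus[OF graph inv k]] that
      unfolding Rs_def by blast
    show "(\<Sum>j\<in>Rs. B j k' * D j) = (\<Sum>l\<in>Rs. A l k' * (\<Sum>j\<in>Rs. B j l * D j)) + D k'"
      if "k' \<in> Rs" for k'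
      using inverse_I_minus_fixpoint[OF inv finite_receiving] that unfolding Rs_def by blast
  qed
  then show ?thesis unfolding omega_weighted_sum D_def Mv_def Ss_def Rs_def .
qed

section \<open>Social learning\<close>

lemma belief_Suc_pos: "0 < belief A N L \<mu>0 x (Suc i) k \<theta>"
  by (simp add: Let_def sum_pos)

lemma belief_pos:
  assumes "\<And>\<theta>. 0 < \<mu>0 k \<theta>"
  shows "0 < belief A N L \<mu>0 x i k \<theta>"
  using assms by (cases i) (simp_all only: belief.simps(1) belief_Suc_pos)

lemma belief_Suc_sum: "(\<Sum>\<theta>\<in>UNIV. belief A N L \<mu>0 x (Suc i) k \<theta>) = 1"
proof -
  define E where "E \<theta> = exp (\<Sum>l<N. A l k * ln (belief A N L \<mu>0 x i l \<theta> * L l (x l (Suc i)) \<theta> /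
                      (\<Sum>\<theta>'\<in>UNIV. belief A N L \<mu>0 x i l \<theta>' * L l (x l (Suc i)) \<theta>')))" for \<theta>
  have "0 < (\<Sum>\<theta>\<in>UNIV. E \<theta>)" by (intro sum_pos) (auto simp: E_def)
  then show ?thesis by (simp add: Let_def E_def[symmetric] sum_divide_distrib[symmetric])
qed

text \<open>Both normalisations of the recursion cancel in log-belief ratios, which therefore evolve
  linearly.\<close>

lemma belief_log_ratio_Suc:
  assumes pos: "\<And>l \<theta>. l < N \<Longrightarrow> 0 < belief A N L \<mu>0 x i l \<theta>"
    and L_pos: "\<And>l \<theta>. l < N \<Longrightarrow> 0 < L l (x l (Suc i)) \<theta>"
  shows "ln (belief A N L \<mu>0 x (Suc i) k \<theta>) - ln (belief A N L \<mu>0 x (Suc i) k \<theta>')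
       = (\<Sum>l<N. A l k * ((ln (belief A N L \<mu>0 x i l \<theta>) - ln (belief A N L \<mu>0 x i l \<theta>'))
                          + (ln (L l (x l (Suc i)) \<theta>) - ln (L l (x l (Suc i)) \<theta>'))))"
proof -
  define \<mu> where "\<mu> = belief A N L \<mu>0 x i"
  define Z where "Z l = (\<Sum>\<theta>''\<in>UNIV. \<mu> l \<theta>'' * L l (x l (Suc i)) \<theta>'')" for l
  define E where "E \<theta>'' = (\<Sum>l<N. A l k * ln (\<mu> l \<theta>'' * L l (x l (Suc i)) \<theta>'' / Z l))" for \<theta>''
  have ln_belief: "ln (belief A N L \<mu>0 x (Suc i) k \<theta>'') = E \<theta>'' - ln (\<Sum>\<theta>'''\<in>UNIV. exp (E \<theta>'''))" for \<theta>''
  proof -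
    have "0 < (\<Sum>\<theta>'''\<in>UNIV. exp (E \<theta>'''))" by (rule sum_pos) auto
    then show ?thesis by (simp add: Let_def E_def Z_def \<mu>_def ln_div)
  qed
  have Z_pos: "0 < Z l" if "l < N" for l
    unfolding Z_def \<mu>_def using pos[OF that] L_pos[OF that] by (intro sum_pos) auto
  have ln_factor: "ln (\<mu> l \<theta>'' * L l (x l (Suc i)) \<theta>'' / Z l)
      = ln (\<mu> l \<theta>'') + ln (L l (x l (Suc i)) \<theta>'') - ln (Z l)" if "l < N" for l \<theta>''
  proof -
    have "0 < \<mu> l \<theta>''" "0 < L l (x l (Suc i)) \<theta>''" "0 < Z l"
      using pos[OF that] L_pos[OF that] Z_pos[OF that] unfolding \<mu>_def by auto
    then show ?thesis by (simp add: ln_div ln_mult)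
  qed
  have "E \<theta> - E \<theta>' = (\<Sum>l<N. A l k * (ln (\<mu> l \<theta> * L l (x l (Suc i)) \<theta> / Z l)
                                   - ln (\<mu> l \<theta>' * L l (x l (Suc i)) \<theta>' / Z l)))"
    unfolding E_def by (simp add: sum_subtractf right_diff_distrib)
  also have "\<dots> = (\<Sum>l<N. A l k * ((ln (\<mu> l \<theta>) - ln (\<mu> l \<theta>'))
                                  + (ln (L l (x l (Suc i)) \<theta>) - ln (L l (x l (Suc i)) \<theta>'))))"
    by (intro sum.cong refl) (simp add: ln_factor)
  finally show ?thesis unfolding ln_belief \<mu>_def by simp
qed

lemma concentration_from_log_ratio_rates:
  fixes \<mu> :: "nat \<Rightarrow> 'h::finite \<Rightarrow> real" and G :: "'h \<Rightarrow> real"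
  assumes pos: "\<And>i \<theta>. 0 < \<mu> i \<theta>"
    and normalized: "eventually (\<lambda>i. (\<Sum>\<theta>\<in>UNIV. \<mu> i \<theta>) = 1) sequentially"
    and rate: "\<And>\<theta>. (\<lambda>i. (ln (\<mu> i \<theta>) - ln (\<mu> i \<theta>\<^sub>s)) / real i) \<longlonglongrightarrow> G \<theta>"
    and neg: "\<And>\<theta>. \<theta> \<noteq> \<theta>\<^sub>s \<Longrightarrow> G \<theta> < 0"
  shows "(\<lambda>i. \<mu> i \<theta>\<^sub>s) \<longlonglongrightarrow> 1" and "(\<lambda>i. ln (\<mu> i \<theta>) / real i) \<longlonglongrightarrow> G \<theta>"
proof -
  define r where "r \<theta> i = ln (\<mu> i \<theta>) - ln (\<mu> i \<theta>\<^sub>s)" for \<theta> i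
  have "(\<lambda>i. exp (r \<theta> i)) \<longlonglongrightarrow> (if \<theta> = \<theta>\<^sub>s then 1 else 0)" for \<theta>
  proof (cases "\<theta> = \<theta>\<^sub>s")
    case False
    have "filterlim (\<lambda>i. r \<theta> i / real i * real i) at_bot sequentially"
      using rate[of \<theta>] neg[OF False] unfolding r_def
      by (rule filterlim_tendsto_neg_mult_at_bot[OF _ _ filterlim_real_sequentially])
    moreover have "eventually (\<lambda>i. r \<theta> i / real i * real i = r \<theta> i) sequentially"
      using eventually_gt_at_top[of 0] by eventually_elim simp
    ultimately have "filterlim (r \<theta>) at_bot sequentially" by (simp add: filterlim_cong)
    then show ?thesis using False filterlim_compose[OF exp_at_bot] by simp
  qed (simp add: r_def)
  then have "(\<lambda>i. \<Sum>\<theta>\<in>UNIV. exp (r \<theta> i)) \<longlonglongrightarrow> (\<Sum>\<theta>\<in>UNIV. if \<theta> = \<theta>\<^sub>s then 1 else 0)"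
    by (rule tendsto_sum)
  moreover have "eventually (\<lambda>i. (\<Sum>\<theta>\<in>UNIV. exp (r \<theta> i)) = inverse (\<mu> i \<theta>\<^sub>s)) sequentially"
    using normalized
    by eventually_elim (simp add: r_def exp_diff pos divide_inverse sum_distrib_right[symmetric])
  ultimately have "(\<lambda>i. inverse (\<mu> i \<theta>\<^sub>s)) \<longlonglongrightarrow> 1" by (simp add: tendsto_cong)
  from tendsto_inverse[OF this] show lim: "(\<lambda>i. \<mu> i \<theta>\<^sub>s) \<longlonglongrightarrow> 1" by simp
  have "(\<lambda>i. r \<theta> i / real i + ln (\<mu> i \<theta>\<^sub>s) * inverse (real i)) \<longlonglongrightarrow> G \<theta> + ln 1 * 0"
    using rate[of \<theta>] unfolding r_def by (intro tendsto_intros lim lim_inverse_n) auto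
  then show "(\<lambda>i. ln (\<mu> i \<theta>) / real i) \<longlonglongrightarrow> G \<theta>"
    by (simp add: r_def divide_inverse algebra_simps)
qed

lemma belief_learning:
  fixes x :: "nat \<Rightarrow> nat \<Rightarrow> 'x" and L :: "nat \<Rightarrow> 'x \<Rightarrow> 'h::finite \<Rightarrow> real"
    and drift :: "'h \<Rightarrow> nat \<Rightarrow> real"
  assumes graph: "weak_graph N A cmp S R"
    and perron: "\<forall>s<S. perron_vec A (subnet cmp N s) p"
    and inv: "inverse_I_minus A (receiving cmp N S) B"
    and k: "k \<in> receiving cmp N S"
    and init_pos: "\<forall>k<N. \<forall>\<theta>. 0 < \<mu>0 k \<theta>"
    and L_pos: "\<forall>l<N. \<forall>i\<ge>1. \<forall>\<theta>. 0 < L l (x l i) \<theta>"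
    and ces: "\<forall>l<N. \<forall>\<theta>.
      (\<lambda>n. (\<Sum>j<n. ln (L l (x l (Suc j)) \<theta>) - ln (L l (x l (Suc j)) \<theta>\<^sub>s)) / real n) \<longlonglongrightarrow> drift \<theta> l"
    and neg: "\<And>\<theta>. \<theta> \<noteq> \<theta>\<^sub>s \<Longrightarrow> (\<Sum>l\<in>sending cmp N S. omega N A cmp S p B l k * drift \<theta> l) < 0"
  shows "(\<lambda>i. belief A N L \<mu>0 x i k \<theta>\<^sub>s) \<longlonglongrightarrow> 1"
    and "(\<lambda>i. ln (belief A N L \<mu>0 x i k \<theta>) / real i)
           \<longlonglongrightarrow> (\<Sum>l\<in>sending cmp N S. omega N A cmp S p B l k * drift \<theta> l)"
proof -
  have pos: "0 < belief A N L \<mu>0 x i l \<theta>" if "l < N" for i l \<theta>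
    using init_pos that by (intro belief_pos) simp
  have kN: "k < N" using k unfolding receiving_def by simp
  have rate: "(\<lambda>i. (ln (belief A N L \<mu>0 x i k \<theta>) - ln (belief A N L \<mu>0 x i k \<theta>\<^sub>s)) / real i)
      \<longlonglongrightarrow> (\<Sum>l\<in>sending cmp N S. omega N A cmp S p B l k * drift \<theta> l)" for \<theta>
  proof (rule network_limit[OF graph perron inv _ _ k])
    show "ln (belief A N L \<mu>0 x (Suc i) k' \<theta>) - ln (belief A N L \<mu>0 x (Suc i) k' \<theta>\<^sub>s)
        = (\<Sum>l<N. A l k' * ((ln (belief A N L \<mu>0 x i l \<theta>) - ln (belief A N L \<mu>0 x i l \<theta>\<^sub>s))
                           + (ln (L l (x l (Suc i)) \<theta>) - ln (L l (x l (Suc i)) \<theta>\<^sub>s))))" for i k'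
      by (rule belief_log_ratio_Suc) (use pos L_pos in auto)
    show "(\<lambda>n. (\<Sum>j<n. ln (L l (x l (Suc j)) \<theta>) - ln (L l (x l (Suc j)) \<theta>\<^sub>s)) / real n) \<longlonglongrightarrow> drift \<theta> l"
      if "l < N" for l
      using ces that by blast
  qed
  note concentration = concentration_from_log_ratio_rates[where \<mu>="\<lambda>i. belief A N L \<mu>0 x i k",
      OF pos[OF kN] _ rate neg]
  have normalized: "eventually (\<lambda>i. (\<Sum>\<theta>\<in>UNIV. belief A N L \<mu>0 x i k \<theta>) = 1) sequentially"
    using eventually_gt_at_top[of 0] by eventually_elim (metis belief_Suc_sum gr0_conv_Suc)
  show "(\<lambda>i. belief A N L \<mu>0 x i k \<theta>\<^sub>s) \<longlonglongrightarrow> 1"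
    and "(\<lambda>i. ln (belief A N L \<mu>0 x i k \<theta>) / real i)
           \<longlonglongrightarrow> (\<Sum>l\<in>sending cmp N S. omega N A cmp S p B l k * drift \<theta> l)"
    using concentration[OF normalized] by simp_all
qed

lemma KL_div_diff:
  fixes f g1 g2 :: "'x \<Rightarrow> real"
  assumes [measurable]: "f \<in> borel_measurable \<nu>" "g1 \<in> borel_measurable \<nu>" "g2 \<in> borel_measurable \<nu>"
    and K1: "KL_finite \<nu> f g1" and K2: "KL_finite \<nu> f g2"
  shows "integrable (density \<nu> f) (\<lambda>x. ln (g1 x) - ln (g2 x))"
    and "integral\<^sup>L (density \<nu> f) (\<lambda>x. ln (g1 x) - ln (g2 x)) = KL_div \<nu> f g2 - KL_div \<nu> f g1"
proof -
  let ?D = "density \<nu> (\<lambda>x. ennreal (f x))"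
  have "AE x in ?D. 0 < f x" by (subst AE_density) auto
  moreover have "AE x in ?D. 0 < g1 x" "AE x in ?D. 0 < g2 x"
    using K1 K2 unfolding KL_finite_def by auto
  ultimately have ae: "AE x in ?D. ln (f x / g2 x) - ln (f x / g1 x) = ln (g1 x) - ln (g2 x)"
    by eventually_elim (simp add: ln_div)
  have I1: "integrable ?D (\<lambda>x. ln (f x / g1 x))" and I2: "integrable ?D (\<lambda>x. ln (f x / g2 x))"
    using K1 K2 unfolding KL_finite_def by auto
  have "integrable ?D (\<lambda>x. ln (f x / g2 x) - ln (f x / g1 x))" using I1 I2 by auto
  then show "integrable (density \<nu> f) (\<lambda>x. ln (g1 x) - ln (g2 x))"
    using integrable_cong_AE[OF _ _ ae] by simp
  have "integral\<^sup>L ?D (\<lambda>x. ln (g1 x) - ln (g2 x)) = integral\<^sup>L ?D (\<lambda>x. ln (f x / g2 x) - ln (f x / g1 x))"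
    using integral_cong_AE[OF _ _ ae] by simp
  also have "\<dots> = KL_div \<nu> f g2 - KL_div \<nu> f g1"
    unfolding KL_div_def by (rule Bochner_Integration.integral_diff[OF I2 I1])
  finally show "integral\<^sup>L (density \<nu> f) (\<lambda>x. ln (g1 x) - ln (g2 x)) = KL_div \<nu> f g2 - KL_div \<nu> f g1" .
qed

lemma (in prob_space) AE_cesaro_log_likelihood_ratio:
  fixes N :: nat and \<xi> :: "nat \<Rightarrow> nat \<Rightarrow> 'a \<Rightarrow> 'x" and L :: "nat \<Rightarrow> 'x \<Rightarrow> 'h::finite \<Rightarrow> real"
  assumes f_meas: "\<forall>k<N. f k \<in> borel_measurable (\<nu> k)"
    and L_meas: "\<forall>k<N. \<forall>\<theta>. (\<lambda>x. L k x \<theta>) \<in> borel_measurable (\<nu> k)"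
    and data_distr: "\<forall>k<N. \<forall>i\<ge>1. distributed M (\<nu> k) (\<xi> k i) (\<lambda>x. ennreal (f k x))"
    and data_indep: "\<forall>k<N. indep_vars (\<lambda>_. \<nu> k) (\<xi> k) {1..}"
    and finite_KL: "\<forall>k<N. \<forall>\<theta>. KL_finite (\<nu> k) (f k) (\<lambda>x. L k x \<theta>)"
  shows "AE \<omega> in M. \<forall>l<N. \<forall>\<theta>.
           (\<lambda>n. (\<Sum>j<n. ln (L l (\<xi> l (Suc j) \<omega>) \<theta>) - ln (L l (\<xi> l (Suc j) \<omega>) \<theta>\<^sub>s)) / real n)
             \<longlonglongrightarrow> KL_div (\<nu> l) (f l) (\<lambda>x. L l x \<theta>\<^sub>s) - KL_div (\<nu> l) (f l) (\<lambda>x. L l x \<theta>)"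
proof -
  have pointwise: "AE \<omega> in M. (\<lambda>n. (\<Sum>j<n. ln (L l (\<xi> l (Suc j) \<omega>) \<theta>) - ln (L l (\<xi> l (Suc j) \<omega>) \<theta>\<^sub>s)) / real n)
            \<longlonglongrightarrow> KL_div (\<nu> l) (f l) (\<lambda>x. L l x \<theta>\<^sub>s) - KL_div (\<nu> l) (f l) (\<lambda>x. L l x \<theta>)"
    if "l < N" for l \<theta>
  proof -
    have [measurable]: "f l \<in> borel_measurable (\<nu> l)" "(\<lambda>x. L l x \<theta>) \<in> borel_measurable (\<nu> l)"
      "(\<lambda>x. L l x \<theta>\<^sub>s) \<in> borel_measurable (\<nu> l)" using that f_meas L_meas by auto
    note KL = KL_div_diff[of "f l" "\<nu> l" "\<lambda>x. L l x \<theta>" "\<lambda>x. L l x \<theta>\<^sub>s"]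
    have "AE \<omega> in M. (\<lambda>n. (\<Sum>j<n. ln (L l (\<xi> l (Suc j) \<omega>) \<theta>) - ln (L l (\<xi> l (Suc j) \<omega>) \<theta>\<^sub>s)) / real n)
            \<longlonglongrightarrow> integral\<^sup>L (density (\<nu> l) (f l)) (\<lambda>x. ln (L l x \<theta>) - ln (L l x \<theta>\<^sub>s))"
      using that data_distr data_indep finite_KL by (intro sample_mean_tendsto KL(1)) auto
    then show ?thesis using that finite_KL by (subst KL(2)[symmetric]) auto
  qed
  show ?thesis by (intro AE_all_countable[THEN iffD2] allI AE_impI pointwise)
qed

lemma (in prob_space) AE_likelihood_pos:
  fixes N :: nat and \<xi> :: "nat \<Rightarrow> nat \<Rightarrow> 'a \<Rightarrow> 'x" and L :: "nat \<Rightarrow> 'x \<Rightarrow> 'h::finite \<Rightarrow> real"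
  assumes data_distr: "\<forall>k<N. \<forall>i\<ge>1. distributed M (\<nu> k) (\<xi> k i) (\<lambda>x. ennreal (f k x))"
    and finite_KL: "\<forall>k<N. \<forall>\<theta>. KL_finite (\<nu> k) (f k) (\<lambda>x. L k x \<theta>)"
  shows "AE \<omega> in M. \<forall>l<N. \<forall>i\<ge>1. \<forall>\<theta>. 0 < L l (\<xi> l i \<omega>) \<theta>"
proof -
  have pointwise: "AE \<omega> in M. 0 < L l (\<xi> l i \<omega>) \<theta>" if "l < N" "1 \<le> i" for l i \<theta>
  proof -
    have \<xi>: "\<xi> l i \<in> measurable M (\<nu> l)" "distr M (\<nu> l) (\<xi> l i) = density (\<nu> l) (f l)"
      using data_distr that unfolding distributed_def by auto
    have "AE x in density (\<nu> l) (f l). 0 < L l x \<theta>"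
      using finite_KL that unfolding KL_finite_def by auto
    then show ?thesis by (intro AE_distrD[OF \<xi>(1)]) (simp only: \<xi>(2))
  qed
  show ?thesis by (simp add: AE_all_countable AE_impI pointwise)
qed

lemma Dscr_diff:
  "Dscr N A cmp S p B \<nu> f L k \<theta>' - Dscr N A cmp S p B \<nu> f L k \<theta>
     = (\<Sum>l\<in>sending cmp N S. omega N A cmp S p B l k *
          (KL_div (\<nu> l) (f l) (\<lambda>x. L l x \<theta>') - KL_div (\<nu> l) (f l) (\<lambda>x. L l x \<theta>)))"
  unfolding Dscr_def by (simp add: sum_subtractf right_diff_distrib)

lemma unique_minimizer_strict:
  fixes F :: "'a \<Rightarrow> real"
  assumes "\<exists>!\<theta>. \<forall>\<theta>'. F \<theta> \<le> F \<theta>'" and "\<forall>\<theta>'. F \<theta>\<^sub>s \<le> F \<theta>'" and "\<theta> \<noteq> \<theta>\<^sub>s"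
  shows "F \<theta>\<^sub>s < F \<theta>"
  using assms by (metis order_trans not_le)

theorem theorem1:
  fixes M :: "'w measure"
    and \<nu> :: "nat \<Rightarrow> 'x measure"
    and \<xi> :: "nat \<Rightarrow> nat \<Rightarrow> 'w \<Rightarrow> 'x"
    and f :: "nat \<Rightarrow> 'x \<Rightarrow> real"
    and L :: "nat \<Rightarrow> 'x \<Rightarrow> 'h::finite \<Rightarrow> real"
    and \<mu>0 :: "nat \<Rightarrow> 'h \<Rightarrow> real"
    and A :: "nat \<Rightarrow> nat \<Rightarrow> real"
    and N S R :: nat
    and cmp :: "nat \<Rightarrow> nat"
    and p :: "nat \<Rightarrow> real"
    and B :: "nat \<Rightarrow> nat \<Rightarrow> real"
  assumes prob: "prob_space M"
    and f_nonneg: "\<forall>k<N. \<forall>x\<in>space (\<nu> k). 0 \<le> f k x"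
    and f_meas: "\<forall>k<N. f k \<in> borel_measurable (\<nu> k)"
    and L_nonneg: "\<forall>k<N. \<forall>\<theta>. \<forall>x\<in>space (\<nu> k). 0 \<le> L k x \<theta>"
    and L_meas: "\<forall>k<N. \<forall>\<theta>. (\<lambda>x. L k x \<theta>) \<in> borel_measurable (\<nu> k)"
    and L_density: "\<forall>k<N. \<forall>\<theta>. (\<integral>\<^sup>+ x. ennreal (L k x \<theta>) \<partial>(\<nu> k)) = 1"
    and data_distr: "\<forall>k<N. \<forall>i\<ge>1. distributed M (\<nu> k) (\<xi> k i) (\<lambda>x. ennreal (f k x))"
    and data_indep: "\<forall>k<N. prob_space.indep_vars M (\<lambda>_. \<nu> k) (\<xi> k) {1..}"
    and mu0_pmf: "\<forall>k<N. (\<forall>\<theta>. 0 \<le> \<mu>0 k \<theta>) \<and> (\<Sum>\<theta>\<in>UNIV. \<mu>0 k \<theta>) = 1"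
    and graph: "weak_graph N A cmp S R"
    and perron: "\<forall>s<S. perron_vec A (subnet cmp N s) p"
    and inv: "inverse_I_minus A (receiving cmp N S) B"
    and finite_KL: "\<forall>k<N. \<forall>\<theta>. KL_finite (\<nu> k) (f k) (\<lambda>x. L k x \<theta>)"
    and init_pos: "\<forall>k<N. \<forall>\<theta>. 0 < \<mu>0 k \<theta>"
    and unique_min: "\<forall>k\<in>receiving cmp N S. \<exists>!\<theta>.
                       \<forall>\<theta>'. Dscr N A cmp S p B \<nu> f L k \<theta> \<le> Dscr N A cmp S p B \<nu> f L k \<theta>'"
  shows "\<forall>k\<in>receiving cmp N S. \<forall>\<theta>s.
           (\<forall>\<theta>'. Dscr N A cmp S p B \<nu> f L k \<theta>s \<le> Dscr N A cmp S p B \<nu> f L k \<theta>') \<longrightarrow>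
           (AE \<omega> in M.
              (\<lambda>i. belief A N L \<mu>0 (\<lambda>l j. \<xi> l j \<omega>) i k \<theta>s) \<longlonglongrightarrow> 1 \<and>
              (\<forall>\<theta>. \<theta> \<noteq> \<theta>s \<longrightarrow>
                 (\<lambda>i. ln (belief A N L \<mu>0 (\<lambda>l j. \<xi> l j \<omega>) i k \<theta>) / real i)
                   \<longlonglongrightarrow> Dscr N A cmp S p B \<nu> f L k \<theta>s - Dscr N A cmp S p B \<nu> f L k \<theta>))"
proof (intro ballI allI impI)
  fix k \<theta>\<^sub>s
  assume k: "k \<in> receiving cmp N S"
    and min: "\<forall>\<theta>'. Dscr N A cmp S p B \<nu> f L k \<theta>\<^sub>s \<le> Dscr N A cmp S p B \<nu> f L k \<theta>'"
  interpret prob_space M by (rule prob)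
  define drift where "drift \<theta> l = KL_div (\<nu> l) (f l) (\<lambda>x. L l x \<theta>\<^sub>s) - KL_div (\<nu> l) (f l) (\<lambda>x. L l x \<theta>)" for \<theta> l
  have neg: "(\<Sum>l\<in>sending cmp N S. omega N A cmp S p B l k * drift \<theta> l) < 0" if "\<theta> \<noteq> \<theta>\<^sub>s" for \<theta>
    using unique_minimizer_strict[OF unique_min[rule_format, OF k] min that]
    unfolding drift_def Dscr_diff[symmetric] by simp
  from AE_cesaro_log_likelihood_ratio[OF f_meas L_meas data_distr data_indep finite_KL, of \<theta>\<^sub>s]
       AE_likelihood_pos[OF data_distr finite_KL]
  show "AE \<omega> in M. (\<lambda>i. belief A N L \<mu>0 (\<lambda>l j. \<xi> l j \<omega>) i k \<theta>\<^sub>s) \<longlonglongrightarrow> 1 \<and>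
          (\<forall>\<theta>. \<theta> \<noteq> \<theta>\<^sub>s \<longrightarrow> (\<lambda>i. ln (belief A N L \<mu>0 (\<lambda>l j. \<xi> l j \<omega>) i k \<theta>) / real i)
                             \<longlonglongrightarrow> Dscr N A cmp S p B \<nu> f L k \<theta>\<^sub>s - Dscr N A cmp S p B \<nu> f L k \<theta>)"
  proof eventually_elim
    case (elim \<omega>)
    from belief_learning[where x="\<lambda>l j. \<xi> l j \<omega>" and L=L and drift=drift and \<theta>\<^sub>s=\<theta>\<^sub>s,
        OF graph perron inv k init_pos elim(2) elim(1)[folded drift_def] neg]
    show ?case unfolding drift_def Dscr_diff by blast
  qed
qed

end
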